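(* Let $(H,R)$ be a semiquasitriangular Hopf algebra with Drinfeld element $u=S(R^{(2)})R^{(1)}$. Then $u$, $S(u)$ and $uS(u)$ are coinvariant for $\nu$, i.e. $\nu(u)=u\otimes 1$, $\nu(S(u))=S(u)\otimes 1$ and $\nu(uS(u))=uS(u)\otimes 1$.
   Context: All vector spaces are over a field $k$, $\otimes=\otimes_k$. For a Hopf algebra $H$ with comultiplication $\Delta$, counit $\epsilon$, antipode $S$, we use Sweedler notation $\Delta(h)=h_1\otimes h_2$, etc. $\operatorname{Z}(H)$ is the centre of $H$. For $R\in H\otimes H$ we write $R=R^{(1)}\otimes R^{(2)}$ (summation understood); $R'^{(1)}\otimes R'^{(2)}$ denotes another copy of $R$. Definition (semiquasitriangular Hopf algebra): a pair $(H,R)$ with $H$ a Hopf algebra with bijective antipode and $R\in H\otimes H$ invertible such that (1) $R^{(1)}_1\otimes R^{(1)}_2\otimes R^{(2)} = R^{(1)}\otimes R'^{(1)}\otimes R^{(2)}R'^{(2)}$; (2) $R^{(1)}\otimes R^{(2)}_1\otimes R^{(2)}_2 = R^{(1)}R'^{(1)}\otimes R'^{(2)}\otimes R^{(2)}$; (3) $R^{(1)}\otimes R^{(2)}_2R'^{(1)}\otimes R^{(2)}_1R'^{(2)} = R^{(1)}\otimes R'^{(1)}R^{(2)}_1\otimes R'^{(2)}R^{(2)}_2$; (4) $R^{(1)}_2R'^{(1)}\otimes R^{(1)}_1R'^{(2)}\otimes R^{(2)} = R'^{(1)}R^{(1)}_1\otimes R'^{(2)}R^{(1)}_2\otimes R^{(2)}$;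 (5) $\nu(h):=R^{(2)}h_2R'^{(2)}\otimes S(h_1)S(R^{(1)})h_3R'^{(1)}\in H\otimes\operatorname{Z}(H)$ for all $h\in H$; (6) $\nu(h)=R^{(1)}h_2R'^{(1)}\otimes S(R'^{(2)})S(h_1)R^{(2)}h_3$ for all $h\in H$. The map $\nu$ in the claim is the one defined in (5). *)

theory Defs
  imports Main
begin

text \<open>
  An element of a tensor power of H is represented by a formal finite sum of
  simple tensors (a list of pairs / triples); two such formal sums denote the
  same element of the tensor product over k iff all functionals of the form
  f1 (x) ... (x) fn (fi k-linear forms on H) agree on them (over a field the
  canonical map into the dual of the tensor power of the dual is injective).
\<close>

definition lin_form :: "('k::field \<Rightarrow> 'h::ring_1 \<Rightarrow> 'h) \<Rightarrow> ('h \<Rightarrow> 'k) \<Rightarrow> bool" where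
  "lin_form scale f \<longleftrightarrow>
     (\<forall>a b. f (a + b) = f a + f b) \<and> (\<forall>c a. f (scale c a) = c * f a)"

definition teq2 :: "('k::field \<Rightarrow> 'h::ring_1 \<Rightarrow> 'h) \<Rightarrow> ('h \<times> 'h) list \<Rightarrow> ('h \<times> 'h) list \<Rightarrow> bool" where
  "teq2 scale xs ys \<longleftrightarrow>
     (\<forall>f g. lin_form scale f \<longrightarrow> lin_form scale g \<longrightarrow>
        (\<Sum>(a, b)\<leftarrow>xs. f a * g b) = (\<Sum>(a, b)\<leftarrow>ys. f a * g b))"

definition teq3 :: "('k::field \<Rightarrow> 'h::ring_1 \<Rightarrow> 'h) \<Rightarrow> ('h \<times> 'h \<times> 'h) list \<Rightarrow> ('h \<times> 'h \<times> 'h) list \<Rightarrow> bool" where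
  "teq3 scale xs ys \<longleftrightarrow>
     (\<forall>f g h. lin_form scale f \<longrightarrow> lin_form scale g \<longrightarrow> lin_form scale h \<longrightarrow>
        (\<Sum>(a, b, c)\<leftarrow>xs. f a * g b * h c) = (\<Sum>(a, b, c)\<leftarrow>ys. f a * g b * h c))"

definition tmul2 :: "('h::ring_1 \<times> 'h) list \<Rightarrow> ('h \<times> 'h) list \<Rightarrow> ('h \<times> 'h) list" where
  "tmul2 xs ys = [(a * c, b * d). (a, b) \<leftarrow> xs, (c, d) \<leftarrow> ys]"

definition centre :: "'h::ring_1 set" where
  "centre = {z. \<forall>x. z * x = x * z}"

definition Delta3 :: "('h \<Rightarrow> ('h \<times> 'h) list) \<Rightarrow> 'h \<Rightarrow> ('h \<times> 'h \<times> 'h) list" where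
  "Delta3 \<Delta> h = [(x, y1, y2). (x, y) \<leftarrow> \<Delta> h, (y1, y2) \<leftarrow> \<Delta> y]"

definition hopf_algebra ::
  "('k::field \<Rightarrow> 'h::ring_1 \<Rightarrow> 'h) \<Rightarrow> ('h \<Rightarrow> ('h \<times> 'h) list) \<Rightarrow> ('h \<Rightarrow> 'k) \<Rightarrow> ('h \<Rightarrow> 'h) \<Rightarrow> bool" where
  "hopf_algebra scale \<Delta> \<epsilon> S \<longleftrightarrow>
     \<comment> \<open>H is a unital associative k-algebra\<close>
     (\<forall>c a b. scale c (a + b) = scale c a + scale c b) \<and>
     (\<forall>c d a. scale (c + d) a = scale c a + scale d a) \<and>
     (\<forall>c d a. scale (c * d) a = scale c (scale d a)) \<and>
     (\<forall>a. scale 1 a = a) \<and>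
     (\<forall>c a b. scale c (a * b) = scale c a * b) \<and>
     (\<forall>c a b. scale c (a * b) = a * scale c b) \<and>
     \<comment> \<open>Delta is a linear, coassociative algebra map\<close>
     (\<forall>a b. teq2 scale (\<Delta> (a + b)) (\<Delta> a @ \<Delta> b)) \<and>
     (\<forall>c a. teq2 scale (\<Delta> (scale c a)) [(scale c x, y). (x, y) \<leftarrow> \<Delta> a]) \<and>
     (\<forall>h. teq3 scale [(x1, x2, y). (x, y) \<leftarrow> \<Delta> h, (x1, x2) \<leftarrow> \<Delta> x] (Delta3 \<Delta> h)) \<and>
     (\<forall>a b. teq2 scale (\<Delta> (a * b)) (tmul2 (\<Delta> a) (\<Delta> b))) \<and>
     teq2 scale (\<Delta> 1) [(1, 1)] \<and>
     \<comment> \<open>epsilon is a linear algebra map and a counit\<close>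
     (\<forall>a b. \<epsilon> (a + b) = \<epsilon> a + \<epsilon> b) \<and>
     (\<forall>c a. \<epsilon> (scale c a) = c * \<epsilon> a) \<and>
     (\<forall>a b. \<epsilon> (a * b) = \<epsilon> a * \<epsilon> b) \<and>
     \<epsilon> 1 = 1 \<and>
     (\<forall>h. (\<Sum>(x, y)\<leftarrow>\<Delta> h. scale (\<epsilon> x) y) = h) \<and>
     (\<forall>h. (\<Sum>(x, y)\<leftarrow>\<Delta> h. scale (\<epsilon> y) x) = h) \<and>
     \<comment> \<open>S is a linear bijective antipode\<close>
     (\<forall>a b. S (a + b) = S a + S b) \<and>
     (\<forall>c a. S (scale c a) = scale c (S a)) \<and>
     (\<forall>h. (\<Sum>(x, y)\<leftarrow>\<Delta> h. S x * y) = scale (\<epsilon> h) 1) \<and>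
     (\<forall>h. (\<Sum>(x, y)\<leftarrow>\<Delta> h. x * S y) = scale (\<epsilon> h) 1) \<and>
     bij S"

definition nu :: "('h::ring_1 \<Rightarrow> ('h \<times> 'h) list) \<Rightarrow> ('h \<Rightarrow> 'h) \<Rightarrow> ('h \<times> 'h) list \<Rightarrow> 'h \<Rightarrow> ('h \<times> 'h) list" where
  "nu \<Delta> S R h =
     [(r2 * h2 * s2, S h1 * S r1 * h3 * s1). (r1, r2) \<leftarrow> R, (s1, s2) \<leftarrow> R, (h1, h2, h3) \<leftarrow> Delta3 \<Delta> h]"

definition semiquasitriangular ::
  "('k::field \<Rightarrow> 'h::ring_1 \<Rightarrow> 'h) \<Rightarrow> ('h \<Rightarrow> ('h \<times> 'h) list) \<Rightarrow> ('h \<Rightarrow> 'k) \<Rightarrow> ('h \<Rightarrow> 'h)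
     \<Rightarrow> ('h \<times> 'h) list \<Rightarrow> bool" where
  "semiquasitriangular scale \<Delta> \<epsilon> S R \<longleftrightarrow>
     hopf_algebra scale \<Delta> \<epsilon> S \<and>
     \<comment> \<open>R is invertible in H (x) H\<close>
     (\<exists>Q. teq2 scale (tmul2 R Q) [(1, 1)] \<and> teq2 scale (tmul2 Q R) [(1, 1)]) \<and>
     \<comment> \<open>(1)\<close>
     teq3 scale [(x1, x2, r2). (r1, r2) \<leftarrow> R, (x1, x2) \<leftarrow> \<Delta> r1]
                [(r1, s1, r2 * s2). (r1, r2) \<leftarrow> R, (s1, s2) \<leftarrow> R] \<and>
     \<comment> \<open>(2)\<close>
     teq3 scale [(r1, y1, y2). (r1, r2) \<leftarrow> R, (y1, y2) \<leftarrow> \<Delta> r2]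
                [(r1 * s1, s2, r2). (r1, r2) \<leftarrow> R, (s1, s2) \<leftarrow> R] \<and>
     \<comment> \<open>(3)\<close>
     teq3 scale [(r1, y2 * s1, y1 * s2). (r1, r2) \<leftarrow> R, (y1, y2) \<leftarrow> \<Delta> r2, (s1, s2) \<leftarrow> R]
                [(r1, s1 * y1, s2 * y2). (r1, r2) \<leftarrow> R, (y1, y2) \<leftarrow> \<Delta> r2, (s1, s2) \<leftarrow> R] \<and>
     \<comment> \<open>(4)\<close>
     teq3 scale [(x2 * s1, x1 * s2, r2). (r1, r2) \<leftarrow> R, (x1, x2) \<leftarrow> \<Delta> r1, (s1, s2) \<leftarrow> R]
                [(s1 * x1, s2 * x2, r2). (r1, r2) \<leftarrow> R, (x1, x2) \<leftarrow> \<Delta> r1, (s1, s2) \<leftarrow> R] \<and>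
     \<comment> \<open>(5): nu(h) lies in H (x) Z(H)\<close>
     (\<forall>h. \<exists>ys. (\<forall>(a, z) \<in> set ys. z \<in> centre) \<and> teq2 scale (nu \<Delta> S R h) ys) \<and>
     \<comment> \<open>(6)\<close>
     (\<forall>h. teq2 scale (nu \<Delta> S R h)
        [(r1 * h2 * s1, S s2 * S h1 * r2 * h3). (r1, r2) \<leftarrow> R, (s1, s2) \<leftarrow> R, (h1, h2, h3) \<leftarrow> Delta3 \<Delta> h])"

definition drinfeld :: "('h::ring_1 \<Rightarrow> 'h) \<Rightarrow> ('h \<times> 'h) list \<Rightarrow> 'h" where
  "drinfeld S R = (\<Sum>(r1, r2)\<leftarrow>R. S r2 * r1)"

end

theory Submission
  imports Defs "HOL.Vector_Spaces"
begin

text \<open>Equalities of formal tensors are tested on products of linear forms; expanding in a basis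
  shows that such an equality may then be paired with any multilinear form, so the axioms can be
  applied inside nested sums. Axiom (5) makes \<nu> multiplicative: inserting
  1 \<otimes> 1 = R^(1) S(R'^(1)) \<otimes> R^(2) R'^(2) between h and k splits \<nu>(hk) into \<nu>(h) \<nu>(k), up to moving
  S(k1) past the central second leg of \<nu>(h). Axioms (1)-(4), with (S \<otimes> S)(R) = R, give
  \<nu>(R^(1)) \<otimes> R^(2) = R^(1) \<otimes> 1 \<otimes> R^(2) and R^(1) \<otimes> \<nu>(S(R^(2))) = R^(1) \<otimes> S(R^(2)) \<otimes> 1.
  Hence \<nu>(u) = \<nu>(S(R^(2))) \<nu>(R^(1)) = u \<otimes> 1, likewise for S(u) = R^(1) S(R^(2)), and u S(u) is
  coinvariant as a product of coinvariant elements.\<close>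

lemma sum_list_swap:
  "(\<Sum>x\<leftarrow>xs. \<Sum>y\<leftarrow>ys. (F x y :: 'c::comm_monoid_add)) = (\<Sum>y\<leftarrow>ys. \<Sum>x\<leftarrow>xs. F x y)"
  by (induction xs) (simp_all add: sum_list_addf)

lemma sum_list_prod_swap:
  "(\<Sum>(a, b)\<leftarrow>xs. \<Sum>(c, d)\<leftarrow>ys. (F a b c d :: 'c::comm_monoid_add))
     = (\<Sum>(c, d)\<leftarrow>ys. \<Sum>(a, b)\<leftarrow>xs. F a b c d)"
  unfolding case_prod_unfold by (rule sum_list_swap)

lemma sum_list_sum_swap:
  "(\<Sum>x\<leftarrow>xs. \<Sum>e\<in>E. F x e) = (\<Sum>e\<in>E. \<Sum>x\<leftarrow>xs. F x e)"
  by (induction xs) (simp_all add: sum.distrib)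

lemma sum_list_map_concat: "sum_list (map f (concat xss)) = (\<Sum>xs\<leftarrow>xss. sum_list (map f xs))"
  by (induction xss) auto

lemma sum_list_prod_cong:
  "(\<And>a b. F a b = G a b) \<Longrightarrow> (\<Sum>(a, b)\<leftarrow>xs. F a b) = (\<Sum>(a, b)\<leftarrow>xs. G a b)"
  by simp

lemma sum_list_prod_swap2:
  "(\<Sum>(a, b)\<leftarrow>xs. \<Sum>(c, d)\<leftarrow>ys. \<Sum>(x, y)\<leftarrow>zs. \<Sum>(y1, y2)\<leftarrow>ws x y.
      (F a b c d x y y1 y2 :: 'k::comm_monoid_add))
   = (\<Sum>(x, y)\<leftarrow>zs. \<Sum>(y1, y2)\<leftarrow>ws x y. \<Sum>(a, b)\<leftarrow>xs. \<Sum>(c, d)\<leftarrow>ys. F a b c d x y y1 y2)"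
  by (simp only: sum_list_prod_swap[where ys = zs] sum_list_prod_swap[where ys = "ws _ _"])

lemma sum_list_prod_triple_swap:
  "(\<Sum>(a, b)\<leftarrow>xs. \<Sum>(c, d, e)\<leftarrow>ys. (F a b c d e :: 'k::comm_monoid_add))
     = (\<Sum>(c, d, e)\<leftarrow>ys. \<Sum>(a, b)\<leftarrow>xs. F a b c d e)"
  unfolding case_prod_unfold by (rule sum_list_swap)

locale k_space = vector_space scale for scale :: "'k::field \<Rightarrow> 'h::ring_1 \<Rightarrow> 'h"
begin

abbreviation LF :: "('h \<Rightarrow> 'k) \<Rightarrow> bool" where "LF f \<equiv> lin_form scale f"

lemma lin_form_add: "LF f \<Longrightarrow> f (a + b) = f a + f b"
  and lin_form_scale: "LF f \<Longrightarrow> f (scale c a) = c * f a"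
  unfolding lin_form_def by auto

lemma lin_form_zero: "LF f \<Longrightarrow> f 0 = 0"
  by (metis add_cancel_right_right lin_form_add)

lemma lin_form_sum: "LF f \<Longrightarrow> f (\<Sum>e\<in>E. g e) = (\<Sum>e\<in>E. f (g e))"
  by (induction E rule: infinite_finite_induct) (auto simp: lin_form_zero lin_form_add)

lemma lin_form_sum_list: "LF f \<Longrightarrow> f (\<Sum>x\<leftarrow>xs. g x) = (\<Sum>x\<leftarrow>xs. f (g x))"
  by (induction xs) (auto simp: lin_form_zero lin_form_add)

lemma lin_form_sum_list_prod: "LF f \<Longrightarrow> f (\<Sum>(x, y)\<leftarrow>xs. g x y) = (\<Sum>(x, y)\<leftarrow>xs. f (g x y))"
  by (simp add: lin_form_sum_list case_prod_unfold)

lemma lin_form_sum_list_scale: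
  "LF f \<Longrightarrow> f (\<Sum>(x, y)\<leftarrow>xs. scale (c x y) (g x y)) = (\<Sum>(x, y)\<leftarrow>xs. c x y * f (g x y))"
  by (simp add: lin_form_sum_list_prod lin_form_scale)

lemma lin_form_mult_right[intro!]: "LF f \<Longrightarrow> LF (\<lambda>x. f x * c)"
  and lin_form_mult_left[intro!]: "LF f \<Longrightarrow> LF (\<lambda>x. c * f x)"
  unfolding lin_form_def by (auto simp: algebra_simps)

lemma lin_form_sum_list_fun[intro!]: "(\<And>y. LF (F y)) \<Longrightarrow> LF (\<lambda>x. \<Sum>y\<leftarrow>ys. F y x)"
  unfolding lin_form_def by (induction ys) (auto simp: distrib_left)

lemma lin_form_case_prod[intro!]: "(\<And>a b. LF (F a b)) \<Longrightarrow> LF (\<lambda>x. case p of (a, b) \<Rightarrow> F a b x)"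
  by (cases p) auto

definition basis :: "'h set" where "basis = extend_basis {}"

definition coord :: "'h \<Rightarrow> 'h \<Rightarrow> 'k" where "coord e x = representation basis x e"

definition coord_supp :: "'h \<Rightarrow> 'h set" where "coord_supp x = {e. coord e x \<noteq> 0}"

lemma independent_basis: "independent basis" and span_basis: "span basis = UNIV"
  unfolding basis_def
  using independent_extend_basis[OF independent_empty] span_extend_basis[OF independent_empty]
  by auto

lemma finite_coord_supp: "finite (coord_supp x)"
  unfolding coord_supp_def coord_def by (rule finite_representation)

lemma lin_form_coord: "LF (coord e)"
  unfolding lin_form_def coord_def
  using representation_add[OF independent_basis] representation_scale[OF independent_basis] span_basis
  by auto

lemma coord_expansion:
  assumes "finite E" "coord_supp x \<subseteq> E"
  shows "x = (\<Sum>e\<in>E. scale (coord e x) e)"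
proof -
  have "(\<Sum>e\<in>E. scale (coord e x) e) = (\<Sum>e\<in>coord_supp x. scale (coord e x) e)"
    using assms by (intro sum.mono_neutral_right) (auto simp: coord_supp_def)
  also have "\<dots> = x"
    unfolding coord_supp_def coord_def
    using sum_nonzero_representation_eq[OF independent_basis] span_basis by auto
  finally show ?thesis by simp
qed

lemma lin_form_coord_expansion:
  assumes "LF f" "finite E" "coord_supp x \<subseteq> E"
  shows "f x = (\<Sum>e\<in>E. coord e x * f e)"
  by (subst coord_expansion[OF assms(2,3)]) (simp add: lin_form_sum[OF assms(1)] lin_form_scale[OF assms(1)])

lemma lin_forms_separate:
  assumes "\<And>f. LF f \<Longrightarrow> f x = f y"
  shows "x = y"
proof -
  let ?E = "coord_supp x \<union> coord_supp y"
  have E: "finite ?E" by (simp add: finite_coord_supp)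
  have "x = (\<Sum>e\<in>?E. scale (coord e x) e)" by (rule coord_expansion[OF E]) auto
  also have "\<dots> = (\<Sum>e\<in>?E. scale (coord e y) e)" using assms[OF lin_form_coord] by simp
  also have "\<dots> = y" by (rule coord_expansion[OF E, symmetric]) auto
  finally show ?thesis .
qed

lemma lin_form_one_nonzero: "\<exists>f. LF f \<and> f 1 \<noteq> 0"
  using lin_forms_separate[of 1 0] by (auto simp: lin_form_zero)

definition bilinear_form :: "('h \<Rightarrow> 'h \<Rightarrow> 'k) \<Rightarrow> bool" where
  "bilinear_form \<Psi> \<longleftrightarrow> (\<forall>a. LF (\<Psi> a)) \<and> (\<forall>b. LF (\<lambda>a. \<Psi> a b))"

definition trilinear_form :: "('h \<Rightarrow> 'h \<Rightarrow> 'h \<Rightarrow> 'k) \<Rightarrow> bool" where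
  "trilinear_form \<Psi> \<longleftrightarrow>
     (\<forall>a b. LF (\<Psi> a b)) \<and> (\<forall>a c. LF (\<lambda>b. \<Psi> a b c)) \<and> (\<forall>b c. LF (\<lambda>a. \<Psi> a b c))"

lemma bilinear_formI[intro!]:
  "(\<And>a. LF (\<Psi> a)) \<Longrightarrow> (\<And>b. LF (\<lambda>a. \<Psi> a b)) \<Longrightarrow> bilinear_form \<Psi>"
  unfolding bilinear_form_def by blast

lemma trilinear_formI[intro!]:
  "(\<And>a b. LF (\<Psi> a b)) \<Longrightarrow> (\<And>a c. LF (\<lambda>b. \<Psi> a b c)) \<Longrightarrow> (\<And>b c. LF (\<lambda>a. \<Psi> a b c))
     \<Longrightarrow> trilinear_form \<Psi>"
  unfolding trilinear_form_def by blast

lemma bilinear_formD: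
  "bilinear_form \<Psi> \<Longrightarrow> LF (\<Psi> a)" "bilinear_form \<Psi> \<Longrightarrow> LF (\<lambda>a. \<Psi> a b)"
  unfolding bilinear_form_def by blast+

lemma trilinear_formD:
  "trilinear_form \<Psi> \<Longrightarrow> LF (\<Psi> a b)" "trilinear_form \<Psi> \<Longrightarrow> LF (\<lambda>b. \<Psi> a b c)"
  "trilinear_form \<Psi> \<Longrightarrow> LF (\<lambda>a. \<Psi> a b c)"
  unfolding trilinear_form_def by blast+

definition coord_supp2 :: "('h \<times> 'h) list \<Rightarrow> 'h set" where
  "coord_supp2 xs = (\<Union>(a, b)\<in>set xs. coord_supp a \<union> coord_supp b)"

definition coord_supp3 :: "('h \<times> 'h \<times> 'h) list \<Rightarrow> 'h set" where
  "coord_supp3 xs = (\<Union>(a, b, c)\<in>set xs. coord_supp a \<union> coord_supp b \<union> coord_supp c)"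

lemma bilinear_sum_coord_expansion:
  assumes \<Phi>: "bilinear_form \<Phi>" and E: "finite E" "coord_supp2 zs \<subseteq> E"
  shows "(\<Sum>(a, b)\<leftarrow>zs. \<Phi> a b) = (\<Sum>e\<in>E. \<Sum>e'\<in>E. (\<Sum>(a, b)\<leftarrow>zs. coord e a * coord e' b) * \<Phi> e e')"
proof -
  have "\<Phi> a b = (\<Sum>e\<in>E. \<Sum>e'\<in>E. coord e a * coord e' b * \<Phi> e e')" if "(a, b) \<in> set zs" for a b
  proof -
    have "coord_supp a \<union> coord_supp b \<subseteq> coord_supp2 zs"
      using that unfolding coord_supp2_def by (auto intro!: bexI[of _ "(a, b)"])
    then have supp: "coord_supp a \<subseteq> E" "coord_supp b \<subseteq> E"
      using E(2) by auto
    have "\<Phi> a b = (\<Sum>e\<in>E. coord e a * \<Phi> e b)"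
      by (rule lin_form_coord_expansion[OF bilinear_formD(2)[OF \<Phi>] E(1) supp(1)])
    also have "\<dots> = (\<Sum>e\<in>E. coord e a * (\<Sum>e'\<in>E. coord e' b * \<Phi> e e'))"
      using lin_form_coord_expansion[OF bilinear_formD(1)[OF \<Phi>] E(1) supp(2)] by simp
    finally show ?thesis by (simp add: sum_distrib_left mult.assoc)
  qed
  then have "(\<Sum>(a, b)\<leftarrow>zs. \<Phi> a b) = (\<Sum>(a, b)\<leftarrow>zs. \<Sum>e\<in>E. \<Sum>e'\<in>E. coord e a * coord e' b * \<Phi> e e')"
    by (intro arg_cong[where f = sum_list] map_cong refl) (clarsimp simp del: map_eq_conv)
  also have "\<dots> = (\<Sum>e\<in>E. \<Sum>e'\<in>E. (\<Sum>(a, b)\<leftarrow>zs. coord e a * coord e' b) * \<Phi> e e')"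
    by (simp add: case_prod_unfold sum_list_sum_swap sum_list_mult_const)
  finally show ?thesis .
qed

lemma trilinear_sum_coord_expansion:
  assumes \<Phi>: "trilinear_form \<Phi>" and E: "finite E" "coord_supp3 zs \<subseteq> E"
  shows "(\<Sum>(a, b, c)\<leftarrow>zs. \<Phi> a b c) = (\<Sum>e\<in>E. \<Sum>e'\<in>E. \<Sum>e''\<in>E.
           (\<Sum>(a, b, c)\<leftarrow>zs. coord e a * coord e' b * coord e'' c) * \<Phi> e e' e'')"
proof -
  have "\<Phi> a b c = (\<Sum>e\<in>E. \<Sum>e'\<in>E. \<Sum>e''\<in>E. coord e a * coord e' b * coord e'' c * \<Phi> e e' e'')"
    if "(a, b, c) \<in> set zs" for a b c
  proof -
    have "coord_supp a \<union> coord_supp b \<union> coord_supp c \<subseteq> coord_supp3 zs"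
      using that unfolding coord_supp3_def by (auto intro!: bexI[of _ "(a, b, c)"])
    then have supp: "coord_supp a \<subseteq> E" "coord_supp b \<subseteq> E" "coord_supp c \<subseteq> E"
      using E(2) by auto
    have "\<Phi> a b c = (\<Sum>e\<in>E. coord e a * \<Phi> e b c)"
      by (rule lin_form_coord_expansion[OF trilinear_formD(3)[OF \<Phi>] E(1) supp(1)])
    also have "\<dots> = (\<Sum>e\<in>E. coord e a * (\<Sum>e'\<in>E. coord e' b * \<Phi> e e' c))"
      using lin_form_coord_expansion[OF trilinear_formD(2)[OF \<Phi>] E(1) supp(2)] by simp
    also have "\<dots> = (\<Sum>e\<in>E. coord e a * (\<Sum>e'\<in>E. coord e' b * (\<Sum>e''\<in>E. coord e'' c * \<Phi> e e' e'')))"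
      using lin_form_coord_expansion[OF trilinear_formD(1)[OF \<Phi>] E(1) supp(3)] by simp
    finally show ?thesis by (simp add: sum_distrib_left mult.assoc)
  qed
  then have "(\<Sum>(a, b, c)\<leftarrow>zs. \<Phi> a b c) = (\<Sum>(a, b, c)\<leftarrow>zs. \<Sum>e\<in>E. \<Sum>e'\<in>E. \<Sum>e''\<in>E.
      coord e a * coord e' b * coord e'' c * \<Phi> e e' e'')"
    by (intro arg_cong[where f = sum_list] map_cong refl) (clarsimp simp del: map_eq_conv)
  also have "\<dots> = (\<Sum>e\<in>E. \<Sum>e'\<in>E. \<Sum>e''\<in>E.
      (\<Sum>(a, b, c)\<leftarrow>zs. coord e a * coord e' b * coord e'' c) * \<Phi> e e' e'')"
    by (simp add: case_prod_unfold sum_list_sum_swap sum_list_mult_const)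
  finally show ?thesis .
qed

lemma teq2_sum_eq:
  assumes eq: "teq2 scale xs ys" and \<Phi>: "bilinear_form \<Phi>"
  shows "(\<Sum>(a, b)\<leftarrow>xs. \<Phi> a b) = (\<Sum>(a, b)\<leftarrow>ys. \<Phi> a b)"
proof -
  let ?E = "coord_supp2 xs \<union> coord_supp2 ys"
  have E: "finite ?E" by (auto simp: coord_supp2_def finite_coord_supp)
  have "(\<Sum>(a, b)\<leftarrow>xs. \<Phi> a b) = (\<Sum>e\<in>?E. \<Sum>e'\<in>?E. (\<Sum>(a, b)\<leftarrow>xs. coord e a * coord e' b) * \<Phi> e e')"
    by (rule bilinear_sum_coord_expansion[OF \<Phi> E]) simp
  also have "\<dots> = (\<Sum>e\<in>?E. \<Sum>e'\<in>?E. (\<Sum>(a, b)\<leftarrow>ys. coord e a * coord e' b) * \<Phi> e e')"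
    using eq lin_form_coord unfolding teq2_def by (intro sum.cong refl) (metis (no_types))
  also have "\<dots> = (\<Sum>(a, b)\<leftarrow>ys. \<Phi> a b)"
    by (rule bilinear_sum_coord_expansion[OF \<Phi> E, symmetric]) simp
  finally show ?thesis .
qed

lemma teq3_sum_eq:
  assumes eq: "teq3 scale xs ys" and \<Phi>: "trilinear_form \<Phi>"
  shows "(\<Sum>(a, b, c)\<leftarrow>xs. \<Phi> a b c) = (\<Sum>(a, b, c)\<leftarrow>ys. \<Phi> a b c)"
proof -
  let ?E = "coord_supp3 xs \<union> coord_supp3 ys"
  have E: "finite ?E" by (auto simp: coord_supp3_def finite_coord_supp)
  have "(\<Sum>(a, b, c)\<leftarrow>xs. \<Phi> a b c) = (\<Sum>e\<in>?E. \<Sum>e'\<in>?E. \<Sum>e''\<in>?E.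
      (\<Sum>(a, b, c)\<leftarrow>xs. coord e a * coord e' b * coord e'' c) * \<Phi> e e' e'')"
    by (rule trilinear_sum_coord_expansion[OF \<Phi> E]) simp
  also have "\<dots> = (\<Sum>e\<in>?E. \<Sum>e'\<in>?E. \<Sum>e''\<in>?E.
      (\<Sum>(a, b, c)\<leftarrow>ys. coord e a * coord e' b * coord e'' c) * \<Phi> e e' e'')"
    using eq lin_form_coord unfolding teq3_def by (intro sum.cong refl) (metis (no_types))
  also have "\<dots> = (\<Sum>(a, b, c)\<leftarrow>ys. \<Phi> a b c)"
    by (rule trilinear_sum_coord_expansion[OF \<Phi> E, symmetric]) simp
  finally show ?thesis .
qed

end

locale hopf =
  fixes scale :: "'k::field \<Rightarrow> 'h::ring_1 \<Rightarrow> 'h"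
    and \<Delta> :: "'h \<Rightarrow> ('h \<times> 'h) list" and \<epsilon> :: "'h \<Rightarrow> 'k" and S :: "'h \<Rightarrow> 'h"
  assumes hopf_algebra: "hopf_algebra scale \<Delta> \<epsilon> S"
begin

sublocale k_space scale
  using hopf_algebra unfolding hopf_algebra_def by unfold_locales simp_all

lemma scale_mult_left: "scale c (a * b) = scale c a * b"
  and scale_mult_right: "scale c (a * b) = a * scale c b"
  and antipode_add: "S (a + b) = S a + S b"
  and antipode_scale: "S (scale c a) = scale c (S a)"
  and counit_add: "\<epsilon> (a + b) = \<epsilon> a + \<epsilon> b"
  and counit_scale: "\<epsilon> (scale c a) = c * \<epsilon> a"
  and counit_mult: "\<epsilon> (a * b) = \<epsilon> a * \<epsilon> b"
  and counit_one: "\<epsilon> 1 = 1"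
  and bij_antipode: "bij S"
  using hopf_algebra unfolding hopf_algebra_def by auto

lemma Delta_add: "teq2 scale (\<Delta> (a + b)) (\<Delta> a @ \<Delta> b)"
  and Delta_scale: "teq2 scale (\<Delta> (scale c a)) [(scale c x, y). (x, y) \<leftarrow> \<Delta> a]"
  and Delta_coassoc: "teq3 scale [(x1, x2, y). (x, y) \<leftarrow> \<Delta> h, (x1, x2) \<leftarrow> \<Delta> x] (Delta3 \<Delta> h)"
  and Delta_mult: "teq2 scale (\<Delta> (a * b)) (tmul2 (\<Delta> a) (\<Delta> b))"
  and Delta_one: "teq2 scale (\<Delta> 1) [(1, 1)]"
  and counit_left: "(\<Sum>(x, y)\<leftarrow>\<Delta> h. scale (\<epsilon> x) y) = h"
  and counit_right: "(\<Sum>(x, y)\<leftarrow>\<Delta> h. scale (\<epsilon> y) x) = h"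
  and antipode_left: "(\<Sum>(x, y)\<leftarrow>\<Delta> h. S x * y) = scale (\<epsilon> h) 1"
  and antipode_right: "(\<Sum>(x, y)\<leftarrow>\<Delta> h. x * S y) = scale (\<epsilon> h) 1"
  using hopf_algebra unfolding hopf_algebra_def by (elim conjE; simp only:)+

definition lin_map :: "('h \<Rightarrow> 'h) \<Rightarrow> bool" where
  "lin_map \<phi> \<longleftrightarrow> (\<forall>a b. \<phi> (a + b) = \<phi> a + \<phi> b) \<and> (\<forall>c a. \<phi> (scale c a) = scale c (\<phi> a))"

lemma lin_map_id[simp, intro!]: "lin_map (\<lambda>x. x)"
  unfolding lin_map_def by simp

lemma lin_map_mult_right[simp, intro!]: "lin_map \<phi> \<Longrightarrow> lin_map (\<lambda>x. \<phi> x * a)"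
  unfolding lin_map_def by (simp add: distrib_right scale_mult_left)

lemma lin_map_mult_left[simp, intro!]: "lin_map \<phi> \<Longrightarrow> lin_map (\<lambda>x. a * \<phi> x)"
  unfolding lin_map_def by (simp add: distrib_left scale_mult_right)

lemma lin_map_antipode[simp, intro!]: "lin_map \<phi> \<Longrightarrow> lin_map (\<lambda>x. S (\<phi> x))"
  unfolding lin_map_def by (simp add: antipode_add antipode_scale)

lemma lin_form_comp: "LF f \<Longrightarrow> lin_map \<phi> \<Longrightarrow> LF (\<lambda>x. f (\<phi> x))"
  unfolding lin_form_def lin_map_def by auto

lemma lin_form_counit_comp[intro!]: "lin_map \<phi> \<Longrightarrow> LF (\<lambda>x. \<epsilon> (\<phi> x))"
  by (rule lin_form_comp) (auto simp: lin_form_def counit_add counit_scale)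

lemma Delta_sum_add:
  "bilinear_form \<Psi> \<Longrightarrow>
     (\<Sum>(x, y)\<leftarrow>\<Delta> (a + b). \<Psi> x y) = (\<Sum>(x, y)\<leftarrow>\<Delta> a. \<Psi> x y) + (\<Sum>(x, y)\<leftarrow>\<Delta> b. \<Psi> x y)"
  using teq2_sum_eq[OF Delta_add] by simp

lemma Delta_sum_scale:
  assumes "bilinear_form \<Psi>"
  shows "(\<Sum>(x, y)\<leftarrow>\<Delta> (scale c a). \<Psi> x y) = c * (\<Sum>(x, y)\<leftarrow>\<Delta> a. \<Psi> x y)"
proof -
  have "(\<Sum>(x, y)\<leftarrow>\<Delta> (scale c a). \<Psi> x y) = (\<Sum>(x, y)\<leftarrow>[(scale c x, y). (x, y) \<leftarrow> \<Delta> a]. \<Psi> x y)"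
    by (rule teq2_sum_eq[OF Delta_scale assms])
  also have "\<dots> = (\<Sum>(x, y)\<leftarrow>\<Delta> a. c * \<Psi> x y)"
    using lin_form_scale[OF bilinear_formD(2)[OF assms]] by (simp add: case_prod_unfold o_def)
  finally show ?thesis by (simp add: sum_list_const_mult case_prod_unfold)
qed

lemma lin_form_Delta_sum[intro!]:
  "bilinear_form \<Psi> \<Longrightarrow> lin_map \<phi> \<Longrightarrow> LF (\<lambda>h. \<Sum>(x, y)\<leftarrow>\<Delta> (\<phi> h). \<Psi> x y)"
  unfolding lin_form_def lin_map_def by (auto simp: Delta_sum_add Delta_sum_scale)

lemma Delta3_sum:
  "(\<Sum>(a, b, c)\<leftarrow>Delta3 \<Delta> h. \<Psi> a b c) = (\<Sum>(x, y)\<leftarrow>\<Delta> h. \<Sum>(y1, y2)\<leftarrow>\<Delta> y. \<Psi> x y1 y2)"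
  unfolding Delta3_def by (simp add: sum_list_map_concat o_def case_prod_unfold)

lemma lin_form_Delta3_sum[intro!]:
  "trilinear_form \<Psi> \<Longrightarrow> lin_map \<phi> \<Longrightarrow> LF (\<lambda>h. \<Sum>(a, b, c)\<leftarrow>Delta3 \<Delta> (\<phi> h). \<Psi> a b c)"
  unfolding Delta3_sum by (intro lin_form_Delta_sum bilinear_formI) (auto dest: trilinear_formD)

lemma Delta_sum_coassoc:
  assumes "trilinear_form \<Psi>"
  shows "(\<Sum>(x, y)\<leftarrow>\<Delta> h. \<Sum>(y1, y2)\<leftarrow>\<Delta> y. \<Psi> x y1 y2) = (\<Sum>(x, y)\<leftarrow>\<Delta> h. \<Sum>(x1, x2)\<leftarrow>\<Delta> x. \<Psi> x1 x2 y)"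
  using teq3_sum_eq[OF Delta_coassoc assms] unfolding Delta3_sum
  by (simp add: sum_list_map_concat o_def case_prod_unfold)

lemma Delta_sum_mult:
  "bilinear_form \<Psi> \<Longrightarrow> (\<Sum>(x, y)\<leftarrow>\<Delta> (a * b). \<Psi> x y)
     = (\<Sum>(x1, y1)\<leftarrow>\<Delta> a. \<Sum>(x2, y2)\<leftarrow>\<Delta> b. \<Psi> (x1 * x2) (y1 * y2))"
  using teq2_sum_eq[OF Delta_mult] unfolding tmul2_def
  by (simp add: sum_list_map_concat o_def case_prod_unfold)

lemma Delta_sum_one: "bilinear_form \<Psi> \<Longrightarrow> (\<Sum>(x, y)\<leftarrow>\<Delta> 1. \<Psi> x y) = \<Psi> 1 1"
  using teq2_sum_eq[OF Delta_one] by simp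

lemma counit_left_form:
  "LF f \<Longrightarrow> lin_map \<phi> \<Longrightarrow> (\<Sum>(x, y)\<leftarrow>\<Delta> h. \<epsilon> x * f (\<phi> y)) = f (\<phi> h)"
  using lin_form_sum_list_scale[of "\<lambda>z. f (\<phi> z)" "\<lambda>x y. \<epsilon> x" "\<lambda>x y. y" "\<Delta> h"]
  by (simp add: lin_form_comp counit_left)

lemma counit_right_form:
  "LF f \<Longrightarrow> lin_map \<phi> \<Longrightarrow> (\<Sum>(x, y)\<leftarrow>\<Delta> h. \<epsilon> y * f (\<phi> x)) = f (\<phi> h)"
  using lin_form_sum_list_scale[of "\<lambda>z. f (\<phi> z)" "\<lambda>x y. \<epsilon> y" "\<lambda>x y. x" "\<Delta> h"]
  by (simp add: lin_form_comp counit_right)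

lemma antipode_left_form:
  assumes f: "LF f" and \<phi>: "lin_map \<phi>"
  shows "(\<Sum>(x, y)\<leftarrow>\<Delta> h. f (\<phi> (S x * y))) = \<epsilon> h * f (\<phi> 1)"
proof -
  have F: "LF (\<lambda>z. f (\<phi> z))" by (rule lin_form_comp[OF f \<phi>])
  show ?thesis
    using arg_cong[OF antipode_left, of "\<lambda>z. f (\<phi> z)" h]
    by (simp add: lin_form_sum_list_prod[OF F] lin_form_scale[OF F])
qed

lemma antipode_right_form:
  assumes f: "LF f" and \<phi>: "lin_map \<phi>"
  shows "(\<Sum>(x, y)\<leftarrow>\<Delta> h. f (\<phi> (x * S y))) = \<epsilon> h * f (\<phi> 1)"
proof -
  have F: "LF (\<lambda>z. f (\<phi> z))" by (rule lin_form_comp[OF f \<phi>])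
  show ?thesis
    using arg_cong[OF antipode_right, of "\<lambda>z. f (\<phi> z)" h]
    by (simp add: lin_form_sum_list_prod[OF F] lin_form_scale[OF F])
qed

lemma antipode_one: "S 1 = 1"
proof (rule lin_forms_separate)
  fix f assume f: "LF f"
  have "(\<Sum>(x, y)\<leftarrow>\<Delta> 1. f (S x * y)) = f (S 1 * 1)"
    by (rule Delta_sum_one) (auto intro!: lin_form_comp[OF f])
  then show "f (S 1) = f 1"
    using antipode_left_form[OF f, of "\<lambda>x. x" 1] by (simp add: counit_one)
qed

text \<open>Antimultiplicativity of S is the uniqueness of convolution inverses: the sum
  S(a1 b1) a2 b2 S(b3) S(a3) collapses to S(ab) from the inside and to S(b) S(a) from the outside.\<close>

lemma antipode_mult_collapse_inner:
  assumes f: "LF f"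
  shows "(\<Sum>(xa, ya)\<leftarrow>\<Delta> a. \<Sum>(a2, a3)\<leftarrow>\<Delta> ya. \<Sum>(xb, yb)\<leftarrow>\<Delta> b. \<Sum>(b2, b3)\<leftarrow>\<Delta> yb.
           f (S (xa * xb) * a2 * (b2 * S b3) * S a3)) = f (S (a * b))"
proof -
  have "(\<Sum>(xa, ya)\<leftarrow>\<Delta> a. \<Sum>(a2, a3)\<leftarrow>\<Delta> ya. \<Sum>(xb, yb)\<leftarrow>\<Delta> b. \<Sum>(b2, b3)\<leftarrow>\<Delta> yb.
           f (S (xa * xb) * a2 * (b2 * S b3) * S a3))
      = (\<Sum>(xa, ya)\<leftarrow>\<Delta> a. \<Sum>(a2, a3)\<leftarrow>\<Delta> ya. \<Sum>(xb, yb)\<leftarrow>\<Delta> b.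
           \<epsilon> yb * f (S (xa * xb) * a2 * S a3))"
    using antipode_right_form[OF f, of "\<lambda>z. S (_ * _) * _ * z * S _"] by simp
  also have "\<dots> = (\<Sum>(xa, ya)\<leftarrow>\<Delta> a. \<Sum>(xb, yb)\<leftarrow>\<Delta> b. \<epsilon> yb *
      (\<Sum>(a2, a3)\<leftarrow>\<Delta> ya. f (S (xa * xb) * (a2 * S a3))))"
    by (simp only: sum_list_swap[of _ "\<Delta> b"] case_prod_unfold)
      (simp add: sum_list_const_mult mult.assoc)
  also have "\<dots> = (\<Sum>(xa, ya)\<leftarrow>\<Delta> a. \<epsilon> ya * (\<Sum>(xb, yb)\<leftarrow>\<Delta> b. \<epsilon> yb * f (S (xa * xb))))"
    using antipode_right_form[OF f, of "\<lambda>z. S (_ * _) * z"]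
    by (simp add: sum_list_const_mult case_prod_unfold algebra_simps)
  also have "\<dots> = (\<Sum>(xa, ya)\<leftarrow>\<Delta> a. \<epsilon> ya * f (S (xa * b)))"
    using counit_right_form[OF f] by simp
  also have "\<dots> = f (S (a * b))"
    using counit_right_form[OF f] by simp
  finally show ?thesis .
qed

lemma antipode_mult_collapse_outer:
  assumes f: "LF f"
  shows "(\<Sum>(xa, ya)\<leftarrow>\<Delta> a. \<Sum>(a1, a2)\<leftarrow>\<Delta> xa. \<Sum>(xb, yb)\<leftarrow>\<Delta> b. \<Sum>(b1, b2)\<leftarrow>\<Delta> xb.
           f (S (a1 * b1) * a2 * (b2 * S yb) * S ya)) = f (S b * S a)"
proof -
  have "(\<Sum>(xa, ya)\<leftarrow>\<Delta> a. \<Sum>(a1, a2)\<leftarrow>\<Delta> xa. \<Sum>(xb, yb)\<leftarrow>\<Delta> b. \<Sum>(b1, b2)\<leftarrow>\<Delta> xb.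
           f (S (a1 * b1) * a2 * (b2 * S yb) * S ya))
      = (\<Sum>(xa, ya)\<leftarrow>\<Delta> a. \<Sum>(xb, yb)\<leftarrow>\<Delta> b. \<Sum>(a1, a2)\<leftarrow>\<Delta> xa. \<Sum>(b1, b2)\<leftarrow>\<Delta> xb.
           f (S (a1 * b1) * (a2 * b2) * (S yb * S ya)))"
    by (simp only: sum_list_prod_swap[of _ "\<Delta> b"] mult.assoc)
  also have "\<dots> = (\<Sum>(xa, ya)\<leftarrow>\<Delta> a. \<Sum>(xb, yb)\<leftarrow>\<Delta> b.
      \<Sum>(c1, c2)\<leftarrow>\<Delta> (xa * xb). f (S c1 * c2 * (S yb * S ya)))"
    by (intro sum_list_prod_cong Delta_sum_mult[symmetric]) (auto intro!: lin_form_comp[OF f])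
  also have "\<dots> = (\<Sum>(xa, ya)\<leftarrow>\<Delta> a. \<epsilon> xa * (\<Sum>(xb, yb)\<leftarrow>\<Delta> b. \<epsilon> xb * f (S yb * S ya)))"
    using antipode_left_form[OF f, of "\<lambda>z. z * (S _ * S _)"]
    by (simp add: counit_mult sum_list_const_mult case_prod_unfold mult.assoc)
  also have "\<dots> = (\<Sum>(xa, ya)\<leftarrow>\<Delta> a. \<epsilon> xa * f (S b * S ya))"
    using counit_left_form[OF f] by simp
  also have "\<dots> = f (S b * S a)"
    using counit_left_form[OF f] by simp
  finally show ?thesis .
qed

lemma antipode_mult: "S (a * b) = S b * S a"
proof (rule lin_forms_separate)
  fix f assume f: "LF f"
  note fc = lin_form_comp[OF f]
  have "(\<Sum>(xa, ya)\<leftarrow>\<Delta> a. \<Sum>(a2, a3)\<leftarrow>\<Delta> ya. \<Sum>(xb, yb)\<leftarrow>\<Delta> b. \<Sum>(b2, b3)\<leftarrow>\<Delta> yb.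
           f (S (xa * xb) * a2 * (b2 * S b3) * S a3))
      = (\<Sum>(xa, ya)\<leftarrow>\<Delta> a. \<Sum>(a2, a3)\<leftarrow>\<Delta> ya. \<Sum>(xb, yb)\<leftarrow>\<Delta> b. \<Sum>(b1, b2)\<leftarrow>\<Delta> xb.
           f (S (xa * b1) * a2 * (b2 * S yb) * S a3))"
    by (intro sum_list_prod_cong Delta_sum_coassoc) (auto intro!: fc)
  also have "\<dots> = (\<Sum>(xa, ya)\<leftarrow>\<Delta> a. \<Sum>(a1, a2)\<leftarrow>\<Delta> xa. \<Sum>(xb, yb)\<leftarrow>\<Delta> b. \<Sum>(b1, b2)\<leftarrow>\<Delta> xb.
           f (S (a1 * b1) * a2 * (b2 * S yb) * S ya))"
    by (rule Delta_sum_coassoc) (auto intro!: fc)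
  finally show "f (S (a * b)) = f (S b * S a)"
    unfolding antipode_mult_collapse_inner[OF f] antipode_mult_collapse_outer[OF f] .
qed

lemma antipode_zero: "S 0 = 0"
  by (metis antipode_add add_cancel_right_right)

lemma antipode_sum_list: "S (\<Sum>(a, b)\<leftarrow>xs. F a b) = (\<Sum>(a, b)\<leftarrow>xs. S (F a b))"
  by (induction xs) (auto simp: antipode_zero antipode_add)

definition Sinv :: "'h \<Rightarrow> 'h" where "Sinv = inv S"

lemma antipode_Sinv[simp]: "S (Sinv x) = x"
  unfolding Sinv_def using bij_antipode by (simp add: bij_is_surj surj_f_inv_f)

lemma Sinv_antipode[simp]: "Sinv (S x) = x"
  unfolding Sinv_def using bij_antipode by (simp add: bij_is_inj)

lemma lin_map_Sinv[simp, intro!]: "lin_map \<phi> \<Longrightarrow> lin_map (\<lambda>x. Sinv (\<phi> x))"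
  unfolding lin_map_def by (metis antipode_Sinv Sinv_antipode antipode_add antipode_scale)

lemma Sinv_one: "Sinv 1 = 1"
  by (metis antipode_one Sinv_antipode)

lemma Sinv_left_form:
  assumes f: "LF f" and \<phi>: "lin_map \<phi>"
  shows "(\<Sum>(x, y)\<leftarrow>\<Delta> h. f (\<phi> (Sinv y * x))) = \<epsilon> h * f (\<phi> 1)"
proof -
  have "lin_map (\<lambda>z. \<phi> (Sinv z))"
    using \<phi> lin_map_Sinv[OF lin_map_id] unfolding lin_map_def by simp
  moreover have "Sinv y * x = Sinv (S x * y)" for x y
    by (metis antipode_Sinv antipode_mult Sinv_antipode)
  ultimately show ?thesis
    using antipode_left_form[OF f, of "\<lambda>z. \<phi> (Sinv z)" h] by (simp add: Sinv_one)
qed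

lemma Delta3_sum_mult:
  assumes "trilinear_form \<Psi>"
  shows "(\<Sum>(c1, c2, c3)\<leftarrow>Delta3 \<Delta> (a * b). \<Psi> c1 c2 c3) =
    (\<Sum>(a1, a2, a3)\<leftarrow>Delta3 \<Delta> a. \<Sum>(b1, b2, b3)\<leftarrow>Delta3 \<Delta> b. \<Psi> (a1 * b1) (a2 * b2) (a3 * b3))"
proof -
  note \<Psi> = trilinear_formD[OF assms, THEN lin_form_comp]
  have "(\<Sum>(c1, c2, c3)\<leftarrow>Delta3 \<Delta> (a * b). \<Psi> c1 c2 c3)
      = (\<Sum>(xa, ya)\<leftarrow>\<Delta> a. \<Sum>(xb, yb)\<leftarrow>\<Delta> b. \<Sum>(y1, y2)\<leftarrow>\<Delta> (ya * yb). \<Psi> (xa * xb) y1 y2)"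
    unfolding Delta3_sum by (rule Delta_sum_mult) (auto intro!: \<Psi>)
  also have "\<dots> = (\<Sum>(xa, ya)\<leftarrow>\<Delta> a. \<Sum>(xb, yb)\<leftarrow>\<Delta> b. \<Sum>(a2, a3)\<leftarrow>\<Delta> ya. \<Sum>(b2, b3)\<leftarrow>\<Delta> yb.
      \<Psi> (xa * xb) (a2 * b2) (a3 * b3))"
    by (intro sum_list_prod_cong Delta_sum_mult) (auto intro!: \<Psi>)
  also have "\<dots> = (\<Sum>(xa, ya)\<leftarrow>\<Delta> a. \<Sum>(a2, a3)\<leftarrow>\<Delta> ya. \<Sum>(xb, yb)\<leftarrow>\<Delta> b. \<Sum>(b2, b3)\<leftarrow>\<Delta> yb.
      \<Psi> (xa * xb) (a2 * b2) (a3 * b3))"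
    by (rule sum_list_prod_cong, rule sum_list_prod_swap)
  finally show ?thesis
    by (simp add: Delta3_sum)
qed

end

locale sqt_hopf = hopf scale \<Delta> \<epsilon> S
  for scale :: "'k::field \<Rightarrow> 'h::ring_1 \<Rightarrow> 'h"
    and \<Delta> :: "'h \<Rightarrow> ('h \<times> 'h) list" and \<epsilon> :: "'h \<Rightarrow> 'k" and S :: "'h \<Rightarrow> 'h" +
  fixes R :: "('h \<times> 'h) list"
  assumes semiquasitriangular: "semiquasitriangular scale \<Delta> \<epsilon> S R"
begin

lemma R_invertible: "\<exists>Q. teq2 scale (tmul2 R Q) [(1, 1)] \<and> teq2 scale (tmul2 Q R) [(1, 1)]"
  and sqt_axiom1: "teq3 scale [(x1, x2, r2). (r1, r2) \<leftarrow> R, (x1, x2) \<leftarrow> \<Delta> r1]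
                [(r1, s1, r2 * s2). (r1, r2) \<leftarrow> R, (s1, s2) \<leftarrow> R]"
  and sqt_axiom2: "teq3 scale [(r1, y1, y2). (r1, r2) \<leftarrow> R, (y1, y2) \<leftarrow> \<Delta> r2]
                [(r1 * s1, s2, r2). (r1, r2) \<leftarrow> R, (s1, s2) \<leftarrow> R]"
  and sqt_axiom3: "teq3 scale [(r1, y2 * s1, y1 * s2). (r1, r2) \<leftarrow> R, (y1, y2) \<leftarrow> \<Delta> r2, (s1, s2) \<leftarrow> R]
                [(r1, s1 * y1, s2 * y2). (r1, r2) \<leftarrow> R, (y1, y2) \<leftarrow> \<Delta> r2, (s1, s2) \<leftarrow> R]"
  and sqt_axiom4: "teq3 scale [(x2 * s1, x1 * s2, r2). (r1, r2) \<leftarrow> R, (x1, x2) \<leftarrow> \<Delta> r1, (s1, s2) \<leftarrow> R]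
                [(s1 * x1, s2 * x2, r2). (r1, r2) \<leftarrow> R, (x1, x2) \<leftarrow> \<Delta> r1, (s1, s2) \<leftarrow> R]"
  and nu_centre_valued: "\<exists>ys. (\<forall>(a, z) \<in> set ys. z \<in> centre) \<and> teq2 scale (nu \<Delta> S R h) ys"
  using semiquasitriangular unfolding semiquasitriangular_def by (elim conjE; simp only:)+

definition Rinv :: "('h \<times> 'h) list" where
  "Rinv = (SOME Q. teq2 scale (tmul2 R Q) [(1, 1)] \<and> teq2 scale (tmul2 Q R) [(1, 1)])"

lemma R_mult_Rinv: "teq2 scale (tmul2 R Rinv) [(1, 1)]"
  using someI_ex[OF R_invertible] unfolding Rinv_def by blast

lemma R_mult_Rinv_sum:
  "bilinear_form \<Psi> \<Longrightarrow> (\<Sum>(r1, r2)\<leftarrow>R. \<Sum>(q1, q2)\<leftarrow>Rinv. \<Psi> (r1 * q1) (r2 * q2)) = \<Psi> 1 1"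
  using teq2_sum_eq[OF R_mult_Rinv] unfolding tmul2_def
  by (simp add: sum_list_map_concat o_def case_prod_unfold)

lemma sqt_axiom1_sum:
  "trilinear_form \<Psi> \<Longrightarrow> (\<Sum>(r1, r2)\<leftarrow>R. \<Sum>(x1, x2)\<leftarrow>\<Delta> r1. \<Psi> x1 x2 r2)
     = (\<Sum>(r1, r2)\<leftarrow>R. \<Sum>(s1, s2)\<leftarrow>R. \<Psi> r1 s1 (r2 * s2))"
  using teq3_sum_eq[OF sqt_axiom1] by (simp add: sum_list_map_concat o_def case_prod_unfold)

lemma sqt_axiom2_sum:
  "trilinear_form \<Psi> \<Longrightarrow> (\<Sum>(r1, r2)\<leftarrow>R. \<Sum>(y1, y2)\<leftarrow>\<Delta> r2. \<Psi> r1 y1 y2)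
     = (\<Sum>(r1, r2)\<leftarrow>R. \<Sum>(s1, s2)\<leftarrow>R. \<Psi> (r1 * s1) s2 r2)"
  using teq3_sum_eq[OF sqt_axiom2] by (simp add: sum_list_map_concat o_def case_prod_unfold)

lemma sqt_axiom3_sum:
  "trilinear_form \<Psi> \<Longrightarrow> (\<Sum>(r1, r2)\<leftarrow>R. \<Sum>(y1, y2)\<leftarrow>\<Delta> r2. \<Sum>(s1, s2)\<leftarrow>R. \<Psi> r1 (y2 * s1) (y1 * s2))
     = (\<Sum>(r1, r2)\<leftarrow>R. \<Sum>(y1, y2)\<leftarrow>\<Delta> r2. \<Sum>(s1, s2)\<leftarrow>R. \<Psi> r1 (s1 * y1) (s2 * y2))"
  using teq3_sum_eq[OF sqt_axiom3] by (simp add: sum_list_map_concat o_def case_prod_unfold)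

lemma sqt_axiom4_sum:
  "trilinear_form \<Psi> \<Longrightarrow> (\<Sum>(r1, r2)\<leftarrow>R. \<Sum>(x1, x2)\<leftarrow>\<Delta> r1. \<Sum>(s1, s2)\<leftarrow>R. \<Psi> (x2 * s1) (x1 * s2) r2)
     = (\<Sum>(r1, r2)\<leftarrow>R. \<Sum>(x1, x2)\<leftarrow>\<Delta> r1. \<Sum>(s1, s2)\<leftarrow>R. \<Psi> (s1 * x1) (s2 * x2) r2)"
  using teq3_sum_eq[OF sqt_axiom4] by (simp add: sum_list_map_concat o_def case_prod_unfold)

text \<open>Applying the counit to the first leg of (1) gives R = (1 \<otimes> e) R with e = (\<epsilon> \<otimes> id)(R);
  cancelling R against its inverse gives e = 1. The second leg is symmetric, via (2).\<close>

lemma R_counit_first_leg: "(\<Sum>(r1, r2)\<leftarrow>R. scale (\<epsilon> r1) r2) = 1"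
proof -
  define e where "e = (\<Sum>(r1, r2)\<leftarrow>R. scale (\<epsilon> r1) r2)"
  have key: "f 1 * g 1 = f 1 * g e" if f: "LF f" and g: "LF g" for f g
  proof -
    note fc = lin_form_comp[OF f] and gc = lin_form_comp[OF g]
    have "f 1 * g 1 = (\<Sum>(r1, r2)\<leftarrow>R. \<Sum>(q1, q2)\<leftarrow>Rinv. f (r1 * q1) * g (r2 * q2))"
      by (rule R_mult_Rinv_sum[symmetric]) (auto intro!: fc gc)
    also have "\<dots> = (\<Sum>(r1, r2)\<leftarrow>R. \<Sum>(x1, x2)\<leftarrow>\<Delta> r1.
        \<epsilon> x1 * (\<Sum>(q1, q2)\<leftarrow>Rinv. f (x2 * q1) * g (r2 * q2)))"
    proof (intro sum_list_prod_cong)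
      fix a b
      show "(\<Sum>(q1, q2)\<leftarrow>Rinv. f (a * q1) * g (b * q2))
          = (\<Sum>(x1, x2)\<leftarrow>\<Delta> a. \<epsilon> x1 * (\<Sum>(q1, q2)\<leftarrow>Rinv. f (x2 * q1) * g (b * q2)))"
        by (rule counit_left_form[of "\<lambda>y. \<Sum>(q1, q2)\<leftarrow>Rinv. f (y * q1) * g (b * q2)" "\<lambda>x. x", symmetric])
          (auto intro!: fc gc)
    qed
    also have "\<dots> = (\<Sum>(r1, r2)\<leftarrow>R. \<Sum>(s1, s2)\<leftarrow>R.
        \<epsilon> r1 * (\<Sum>(q1, q2)\<leftarrow>Rinv. f (s1 * q1) * g (r2 * s2 * q2)))"
      by (rule sqt_axiom1_sum) (auto intro!: fc gc)
    also have "\<dots> = (\<Sum>(s1, s2)\<leftarrow>R. \<Sum>(r1, r2)\<leftarrow>R.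
        \<epsilon> r1 * (\<Sum>(q1, q2)\<leftarrow>Rinv. f (s1 * q1) * g (r2 * s2 * q2)))"
      by (rule sum_list_prod_swap)
    also have "\<dots> = (\<Sum>(s1, s2)\<leftarrow>R. \<Sum>(q1, q2)\<leftarrow>Rinv. f (s1 * q1) * g (e * s2 * q2))"
      unfolding e_def
    proof (intro sum_list_prod_cong)
      fix a b
      show "(\<Sum>(r1, r2)\<leftarrow>R. \<epsilon> r1 * (\<Sum>(q1, q2)\<leftarrow>Rinv. f (a * q1) * g (r2 * b * q2)))
          = (\<Sum>(q1, q2)\<leftarrow>Rinv. f (a * q1) * g ((\<Sum>(r1, r2)\<leftarrow>R. scale (\<epsilon> r1) r2) * b * q2))"
        by (subst lin_form_sum_list_scale[of "\<lambda>z. \<Sum>(q1, q2)\<leftarrow>Rinv. f (a * q1) * g (z * b * q2)"])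
          (auto intro!: fc gc)
    qed
    also have "\<dots> = f 1 * g e"
      unfolding mult.assoc by (subst R_mult_Rinv_sum[of "\<lambda>x y. f x * g (e * y)"]) (auto intro!: fc gc)
    finally show ?thesis .
  qed
  obtain f where f: "LF f" "f 1 \<noteq> 0" using lin_form_one_nonzero by blast
  have "e = 1" by (rule lin_forms_separate) (use key[OF f(1)] f(2) in \<open>metis mult_left_cancel\<close>)
  then show ?thesis unfolding e_def .
qed

lemma R_counit_second_leg: "(\<Sum>(r1, r2)\<leftarrow>R. scale (\<epsilon> r2) r1) = 1"
proof -
  define e where "e = (\<Sum>(r1, r2)\<leftarrow>R. scale (\<epsilon> r2) r1)"
  have key: "f 1 * g 1 = f e * g 1" if f: "LF f" and g: "LF g" for f g
  proof -
    note fc = lin_form_comp[OF f] and gc = lin_form_comp[OF g]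
    have "f 1 * g 1 = (\<Sum>(r1, r2)\<leftarrow>R. \<Sum>(q1, q2)\<leftarrow>Rinv. f (r1 * q1) * g (r2 * q2))"
      by (rule R_mult_Rinv_sum[symmetric]) (auto intro!: fc gc)
    also have "\<dots> = (\<Sum>(r1, r2)\<leftarrow>R. \<Sum>(y1, y2)\<leftarrow>\<Delta> r2.
        \<epsilon> y2 * (\<Sum>(q1, q2)\<leftarrow>Rinv. f (r1 * q1) * g (y1 * q2)))"
    proof (intro sum_list_prod_cong)
      fix a b
      show "(\<Sum>(q1, q2)\<leftarrow>Rinv. f (a * q1) * g (b * q2))
          = (\<Sum>(y1, y2)\<leftarrow>\<Delta> b. \<epsilon> y2 * (\<Sum>(q1, q2)\<leftarrow>Rinv. f (a * q1) * g (y1 * q2)))"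
        by (rule counit_right_form[of "\<lambda>y. \<Sum>(q1, q2)\<leftarrow>Rinv. f (a * q1) * g (y * q2)" "\<lambda>x. x", symmetric])
          (auto intro!: fc gc)
    qed
    also have "\<dots> = (\<Sum>(r1, r2)\<leftarrow>R. \<Sum>(s1, s2)\<leftarrow>R.
        \<epsilon> r2 * (\<Sum>(q1, q2)\<leftarrow>Rinv. f (r1 * s1 * q1) * g (s2 * q2)))"
      by (rule sqt_axiom2_sum) (auto intro!: fc gc)
    also have "\<dots> = (\<Sum>(s1, s2)\<leftarrow>R. \<Sum>(r1, r2)\<leftarrow>R.
        \<epsilon> r2 * (\<Sum>(q1, q2)\<leftarrow>Rinv. f (r1 * s1 * q1) * g (s2 * q2)))"
      by (rule sum_list_prod_swap)
    also have "\<dots> = (\<Sum>(s1, s2)\<leftarrow>R. \<Sum>(q1, q2)\<leftarrow>Rinv. f (e * s1 * q1) * g (s2 * q2))"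
      unfolding e_def
    proof (intro sum_list_prod_cong)
      fix a b
      show "(\<Sum>(r1, r2)\<leftarrow>R. \<epsilon> r2 * (\<Sum>(q1, q2)\<leftarrow>Rinv. f (r1 * a * q1) * g (b * q2)))
          = (\<Sum>(q1, q2)\<leftarrow>Rinv. f ((\<Sum>(r1, r2)\<leftarrow>R. scale (\<epsilon> r2) r1) * a * q1) * g (b * q2))"
        by (subst lin_form_sum_list_scale[of "\<lambda>z. \<Sum>(q1, q2)\<leftarrow>Rinv. f (z * a * q1) * g (b * q2)"])
          (auto intro!: fc gc)
    qed
    also have "\<dots> = f e * g 1"
      unfolding mult.assoc by (subst R_mult_Rinv_sum[of "\<lambda>x y. f (e * x) * g y"]) (auto intro!: fc gc)
    finally show ?thesis .
  qed
  obtain g where g: "LF g" "g 1 \<noteq> 0" using lin_form_one_nonzero by blast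
  have "e = 1" by (rule lin_forms_separate) (use key[OF _ g(1)] g(2) in \<open>metis mult_right_cancel\<close>)
  then show ?thesis unfolding e_def .
qed

lemma antipode_R_mult_R:
  assumes "bilinear_form \<Psi>"
  shows "(\<Sum>(r1, r2)\<leftarrow>R. \<Sum>(s1, s2)\<leftarrow>R. \<Psi> (S r1 * s1) (r2 * s2)) = \<Psi> 1 1"
proof -
  note \<Psi> = bilinear_formD[OF assms]
  have "(\<Sum>(r1, r2)\<leftarrow>R. \<Sum>(s1, s2)\<leftarrow>R. \<Psi> (S r1 * s1) (r2 * s2))
      = (\<Sum>(r1, r2)\<leftarrow>R. \<Sum>(x1, x2)\<leftarrow>\<Delta> r1. \<Psi> (S x1 * x2) r2)"
    by (rule sqt_axiom1_sum[symmetric]) (auto intro!: \<Psi>[THEN lin_form_comp])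
  also have "\<dots> = (\<Sum>(r1, r2)\<leftarrow>R. \<epsilon> r1 * \<Psi> 1 r2)"
    using antipode_left_form[OF \<Psi>(2) lin_map_id] by simp
  also have "\<dots> = \<Psi> 1 1"
    using lin_form_sum_list_scale[OF \<Psi>(1), where xs = R and c = "\<lambda>x y. \<epsilon> x" and g = "\<lambda>x y. y"]
    by (simp add: R_counit_first_leg)
  finally show ?thesis .
qed

lemma Sinv_R_mult_R:
  assumes "bilinear_form \<Psi>"
  shows "(\<Sum>(r1, r2)\<leftarrow>R. \<Sum>(s1, s2)\<leftarrow>R. \<Psi> (r1 * s1) (Sinv r2 * s2)) = \<Psi> 1 1"
proof -
  note \<Psi> = bilinear_formD[OF assms]
  have "(\<Sum>(r1, r2)\<leftarrow>R. \<Sum>(s1, s2)\<leftarrow>R. \<Psi> (r1 * s1) (Sinv r2 * s2))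
      = (\<Sum>(r1, r2)\<leftarrow>R. \<Sum>(y1, y2)\<leftarrow>\<Delta> r2. \<Psi> r1 (Sinv y2 * y1))"
    by (rule sqt_axiom2_sum[symmetric]) (auto intro!: \<Psi>[THEN lin_form_comp])
  also have "\<dots> = (\<Sum>(r1, r2)\<leftarrow>R. \<epsilon> r2 * \<Psi> r1 1)"
    using Sinv_left_form[OF \<Psi>(1) lin_map_id] by simp
  also have "\<dots> = \<Psi> 1 1"
    using lin_form_sum_list_scale[OF \<Psi>(2), where xs = R and c = "\<lambda>x y. \<epsilon> y" and g = "\<lambda>x y. x"]
    by (simp add: R_counit_second_leg)
  finally show ?thesis .
qed

lemma antipode_R_eq_Rinv:
  assumes "bilinear_form \<Psi>"
  shows "(\<Sum>(r1, r2)\<leftarrow>R. \<Psi> (S r1) r2) = (\<Sum>(q1, q2)\<leftarrow>Rinv. \<Psi> q1 q2)"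
proof -
  note \<Psi> = bilinear_formD[OF assms, THEN lin_form_comp]
  have "(\<Sum>(r1, r2)\<leftarrow>R. \<Psi> (S r1) r2)
      = (\<Sum>(r1, r2)\<leftarrow>R. \<Sum>(s1, s2)\<leftarrow>R. \<Sum>(q1, q2)\<leftarrow>Rinv. \<Psi> (S r1 * (s1 * q1)) (r2 * (s2 * q2)))"
  proof (intro sum_list_prod_cong)
    fix a b
    show "\<Psi> (S a) b = (\<Sum>(s1, s2)\<leftarrow>R. \<Sum>(q1, q2)\<leftarrow>Rinv. \<Psi> (S a * (s1 * q1)) (b * (s2 * q2)))"
      by (subst R_mult_Rinv_sum[of "\<lambda>x y. \<Psi> (S a * x) (b * y)"]) (auto intro!: \<Psi>)
  qed
  also have "\<dots> = (\<Sum>(q1, q2)\<leftarrow>Rinv. \<Sum>(r1, r2)\<leftarrow>R. \<Sum>(s1, s2)\<leftarrow>R.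
      \<Psi> (S r1 * (s1 * q1)) (r2 * (s2 * q2)))"
    by (simp only: sum_list_prod_swap[of _ Rinv])
  also have "\<dots> = (\<Sum>(q1, q2)\<leftarrow>Rinv. \<Psi> q1 q2)"
  proof (intro sum_list_prod_cong)
    fix a b
    show "(\<Sum>(r1, r2)\<leftarrow>R. \<Sum>(s1, s2)\<leftarrow>R. \<Psi> (S r1 * (s1 * a)) (r2 * (s2 * b))) = \<Psi> a b"
      unfolding mult.assoc[symmetric]
      by (subst antipode_R_mult_R[of "\<lambda>x y. \<Psi> (x * a) (y * b)"]) (auto intro!: \<Psi>)
  qed
  finally show ?thesis .
qed

lemma Sinv_R_eq_Rinv:
  assumes "bilinear_form \<Psi>"
  shows "(\<Sum>(r1, r2)\<leftarrow>R. \<Psi> r1 (Sinv r2)) = (\<Sum>(q1, q2)\<leftarrow>Rinv. \<Psi> q1 q2)"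
proof -
  note \<Psi> = bilinear_formD[OF assms, THEN lin_form_comp]
  have "(\<Sum>(r1, r2)\<leftarrow>R. \<Psi> r1 (Sinv r2))
      = (\<Sum>(r1, r2)\<leftarrow>R. \<Sum>(s1, s2)\<leftarrow>R. \<Sum>(q1, q2)\<leftarrow>Rinv. \<Psi> (r1 * (s1 * q1)) (Sinv r2 * (s2 * q2)))"
  proof (intro sum_list_prod_cong)
    fix a b
    show "\<Psi> a (Sinv b) = (\<Sum>(s1, s2)\<leftarrow>R. \<Sum>(q1, q2)\<leftarrow>Rinv. \<Psi> (a * (s1 * q1)) (Sinv b * (s2 * q2)))"
      by (subst R_mult_Rinv_sum[of "\<lambda>x y. \<Psi> (a * x) (Sinv b * y)"]) (auto intro!: \<Psi>)
  qed
  also have "\<dots> = (\<Sum>(q1, q2)\<leftarrow>Rinv. \<Sum>(r1, r2)\<leftarrow>R. \<Sum>(s1, s2)\<leftarrow>R.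
      \<Psi> (r1 * (s1 * q1)) (Sinv r2 * (s2 * q2)))"
    by (simp only: sum_list_prod_swap[of _ Rinv])
  also have "\<dots> = (\<Sum>(q1, q2)\<leftarrow>Rinv. \<Psi> q1 q2)"
  proof (intro sum_list_prod_cong)
    fix a b
    show "(\<Sum>(r1, r2)\<leftarrow>R. \<Sum>(s1, s2)\<leftarrow>R. \<Psi> (r1 * (s1 * a)) (Sinv r2 * (s2 * b))) = \<Psi> a b"
      unfolding mult.assoc[symmetric]
      by (subst Sinv_R_mult_R[of "\<lambda>x y. \<Psi> (x * a) (y * b)"]) (auto intro!: \<Psi>)
  qed
  finally show ?thesis .
qed

lemma R_mult_antipode_R:
  assumes "bilinear_form \<Psi>"
  shows "(\<Sum>(r1, r2)\<leftarrow>R. \<Sum>(s1, s2)\<leftarrow>R. \<Psi> (r1 * S s1) (r2 * s2)) = \<Psi> 1 1"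
proof -
  note \<Psi> = bilinear_formD[OF assms, THEN lin_form_comp]
  have "(\<Sum>(s1, s2)\<leftarrow>R. \<Psi> (a * S s1) (b * s2)) = (\<Sum>(q1, q2)\<leftarrow>Rinv. \<Psi> (a * q1) (b * q2))" for a b
    by (rule antipode_R_eq_Rinv[of "\<lambda>x y. \<Psi> (a * x) (b * y)"]) (auto intro!: \<Psi>)
  then show ?thesis
    using R_mult_Rinv_sum[OF assms] by simp
qed

lemma antipode_antipode_R:
  assumes "bilinear_form \<Psi>"
  shows "(\<Sum>(r1, r2)\<leftarrow>R. \<Psi> (S r1) (S r2)) = (\<Sum>(r1, r2)\<leftarrow>R. \<Psi> r1 r2)"
proof -
  note \<Psi> = bilinear_formD[OF assms, THEN lin_form_comp]
  have "(\<Sum>(r1, r2)\<leftarrow>R. \<Psi> (S r1) (S r2)) = (\<Sum>(q1, q2)\<leftarrow>Rinv. \<Psi> q1 (S q2))"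
    by (rule antipode_R_eq_Rinv[of "\<lambda>x y. \<Psi> x (S y)"]) (auto intro!: \<Psi>)
  also have "\<dots> = (\<Sum>(r1, r2)\<leftarrow>R. \<Psi> r1 (S (Sinv r2)))"
    by (rule Sinv_R_eq_Rinv[of "\<lambda>x y. \<Psi> x (S y)", symmetric]) (auto intro!: \<Psi>)
  finally show ?thesis by simp
qed

abbreviation \<nu> :: "'h \<Rightarrow> ('h \<times> 'h) list" where "\<nu> \<equiv> nu \<Delta> S R"

lemma nu_sum: "(\<Sum>(X, Z)\<leftarrow>\<nu> h. \<Psi> X Z) =
  (\<Sum>(r1, r2)\<leftarrow>R. \<Sum>(s1, s2)\<leftarrow>R. \<Sum>(a1, a2, a3)\<leftarrow>Delta3 \<Delta> h. \<Psi> (r2 * a2 * s2) (S a1 * S r1 * a3 * s1))"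
  unfolding nu_def by (simp add: sum_list_map_concat o_def case_prod_unfold)

lemma lin_form_nu_sum[intro!]:
  assumes "bilinear_form \<Psi>" "lin_map \<phi>"
  shows "LF (\<lambda>h. \<Sum>(X, Z)\<leftarrow>\<nu> (\<phi> h). \<Psi> X Z)"
  unfolding nu_sum using assms(2) by (auto intro!: bilinear_formD[OF assms(1), THEN lin_form_comp])

lemma sqt_axiom3_sum_nested:
  assumes "\<And>s1 s2 p1 p2. trilinear_form (\<lambda>a b c. \<Phi> a s1 s2 p1 p2 b c)"
  shows "(\<Sum>(r1, r2)\<leftarrow>R. \<Sum>(y1, y2)\<leftarrow>\<Delta> r2. \<Sum>(s1, s2)\<leftarrow>R. \<Sum>(p1, p2)\<leftarrow>R. \<Sum>(t1, t2)\<leftarrow>R.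
           \<Phi> r1 s1 s2 p1 p2 (y2 * t1) (y1 * t2))
       = (\<Sum>(r1, r2)\<leftarrow>R. \<Sum>(y1, y2)\<leftarrow>\<Delta> r2. \<Sum>(s1, s2)\<leftarrow>R. \<Sum>(p1, p2)\<leftarrow>R. \<Sum>(t1, t2)\<leftarrow>R.
           \<Phi> r1 s1 s2 p1 p2 (t1 * y1) (t2 * y2))"
proof -
  have rotate: "(\<Sum>(s1, s2)\<leftarrow>R. \<Sum>(p1, p2)\<leftarrow>R. \<Sum>(t1, t2)\<leftarrow>R. G s1 s2 p1 p2 t1 t2)
      = (\<Sum>(t1, t2)\<leftarrow>R. \<Sum>(s1, s2)\<leftarrow>R. \<Sum>(p1, p2)\<leftarrow>R. G s1 s2 p1 p2 t1 t2)"
    for G :: "'h \<Rightarrow> 'h \<Rightarrow> 'h \<Rightarrow> 'h \<Rightarrow> 'h \<Rightarrow> 'h \<Rightarrow> 'k"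
    by (subst sum_list_prod_cong[OF sum_list_prod_swap]) (rule sum_list_prod_swap)
  have "(\<Sum>(r1, r2)\<leftarrow>R. \<Sum>(y1, y2)\<leftarrow>\<Delta> r2. \<Sum>(s1, s2)\<leftarrow>R. \<Sum>(p1, p2)\<leftarrow>R. \<Sum>(t1, t2)\<leftarrow>R.
           \<Phi> r1 s1 s2 p1 p2 (y2 * t1) (y1 * t2))
      = (\<Sum>(r1, r2)\<leftarrow>R. \<Sum>(y1, y2)\<leftarrow>\<Delta> r2. \<Sum>(t1, t2)\<leftarrow>R. \<Sum>(s1, s2)\<leftarrow>R. \<Sum>(p1, p2)\<leftarrow>R.
           \<Phi> r1 s1 s2 p1 p2 (y2 * t1) (y1 * t2))"
    by (rule sum_list_prod_cong, rule sum_list_prod_cong, rule rotate)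
  also have "\<dots> = (\<Sum>(r1, r2)\<leftarrow>R. \<Sum>(y1, y2)\<leftarrow>\<Delta> r2. \<Sum>(t1, t2)\<leftarrow>R. \<Sum>(s1, s2)\<leftarrow>R. \<Sum>(p1, p2)\<leftarrow>R.
           \<Phi> r1 s1 s2 p1 p2 (t1 * y1) (t2 * y2))"
    by (rule sqt_axiom3_sum[of "\<lambda>a b c. \<Sum>(s1, s2)\<leftarrow>R. \<Sum>(p1, p2)\<leftarrow>R. \<Phi> a s1 s2 p1 p2 b c"])
      (use trilinear_formD[OF assms] in auto)
  also have "\<dots> = (\<Sum>(r1, r2)\<leftarrow>R. \<Sum>(y1, y2)\<leftarrow>\<Delta> r2. \<Sum>(s1, s2)\<leftarrow>R. \<Sum>(p1, p2)\<leftarrow>R. \<Sum>(t1, t2)\<leftarrow>R.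
           \<Phi> r1 s1 s2 p1 p2 (t1 * y1) (t2 * y2))"
    by (rule sum_list_prod_cong, rule sum_list_prod_cong, rule rotate[symmetric])
  finally show ?thesis .
qed

lemma sqt_axiom4_sum_nested:
  assumes "\<And>p1 p2. trilinear_form (\<Phi> p1 p2)"
  shows "(\<Sum>(r1, r2)\<leftarrow>R. \<Sum>(x1, x2)\<leftarrow>\<Delta> r1. \<Sum>(p1, p2)\<leftarrow>R. \<Sum>(s1, s2)\<leftarrow>R. \<Phi> p1 p2 (x2 * s1) (x1 * s2) r2)
       = (\<Sum>(r1, r2)\<leftarrow>R. \<Sum>(x1, x2)\<leftarrow>\<Delta> r1. \<Sum>(p1, p2)\<leftarrow>R. \<Sum>(s1, s2)\<leftarrow>R. \<Phi> p1 p2 (s1 * x1) (s2 * x2) r2)"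
proof -
  have "(\<Sum>(r1, r2)\<leftarrow>R. \<Sum>(x1, x2)\<leftarrow>\<Delta> r1. \<Sum>(p1, p2)\<leftarrow>R. \<Sum>(s1, s2)\<leftarrow>R. \<Phi> p1 p2 (x2 * s1) (x1 * s2) r2)
      = (\<Sum>(r1, r2)\<leftarrow>R. \<Sum>(x1, x2)\<leftarrow>\<Delta> r1. \<Sum>(s1, s2)\<leftarrow>R. \<Sum>(p1, p2)\<leftarrow>R. \<Phi> p1 p2 (x2 * s1) (x1 * s2) r2)"
    by (rule sum_list_prod_cong, rule sum_list_prod_cong, rule sum_list_prod_swap)
  also have "\<dots> = (\<Sum>(r1, r2)\<leftarrow>R. \<Sum>(x1, x2)\<leftarrow>\<Delta> r1. \<Sum>(s1, s2)\<leftarrow>R. \<Sum>(p1, p2)\<leftarrow>R. \<Phi> p1 p2 (s1 * x1) (s2 * x2) r2)"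
    by (rule sqt_axiom4_sum[of "\<lambda>a b c. \<Sum>(p1, p2)\<leftarrow>R. \<Phi> p1 p2 a b c"])
      (use trilinear_formD[OF assms] in auto)
  also have "\<dots> = (\<Sum>(r1, r2)\<leftarrow>R. \<Sum>(x1, x2)\<leftarrow>\<Delta> r1. \<Sum>(p1, p2)\<leftarrow>R. \<Sum>(s1, s2)\<leftarrow>R. \<Phi> p1 p2 (s1 * x1) (s2 * x2) r2)"
    by (rule sum_list_prod_cong, rule sum_list_prod_cong, rule sum_list_prod_swap)
  finally show ?thesis .
qed

lemma sqt_axiom1_antipode_collapse:
  assumes "trilinear_form \<Psi>"
  shows "(\<Sum>(r1, r2)\<leftarrow>R. \<Sum>(s1, s2)\<leftarrow>R. \<Sum>(y1, y2)\<leftarrow>\<Delta> s1. \<Psi> y2 (S r1 * y1) (r2 * s2))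
       = (\<Sum>(r1, r2)\<leftarrow>R. \<Psi> r1 1 r2)"
proof -
  note \<Psi> = trilinear_formD[OF assms, THEN lin_form_comp]
  have "(\<Sum>(r1, r2)\<leftarrow>R. \<Sum>(s1, s2)\<leftarrow>R. \<Sum>(y1, y2)\<leftarrow>\<Delta> s1. \<Psi> y2 (S r1 * y1) (r2 * s2))
      = (\<Sum>(r1, r2)\<leftarrow>R. \<Sum>(x, y)\<leftarrow>\<Delta> r1. \<Sum>(y1, y2)\<leftarrow>\<Delta> y. \<Psi> y2 (S x * y1) r2)"
    by (rule sqt_axiom1_sum[of "\<lambda>x y c. \<Sum>(y1, y2)\<leftarrow>\<Delta> y. \<Psi> y2 (S x * y1) c", symmetric])
      (auto intro!: \<Psi>)
  also have "\<dots> = (\<Sum>(r1, r2)\<leftarrow>R. \<Sum>(x, y)\<leftarrow>\<Delta> r1. \<Sum>(x1, x2)\<leftarrow>\<Delta> x. \<Psi> y (S x1 * x2) r2)"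
    by (intro sum_list_prod_cong Delta_sum_coassoc[of "\<lambda>x y1 y2. \<Psi> y2 (S x * y1) _"]) (auto intro!: \<Psi>)
  also have "\<dots> = (\<Sum>(r1, r2)\<leftarrow>R. \<Sum>(x, y)\<leftarrow>\<Delta> r1. \<epsilon> x * \<Psi> y 1 r2)"
    using antipode_left_form[OF trilinear_formD(2)[OF assms] lin_map_id] by simp
  also have "\<dots> = (\<Sum>(r1, r2)\<leftarrow>R. \<Psi> r1 1 r2)"
    using counit_left_form[OF trilinear_formD(3)[OF assms] lin_map_id] by simp
  finally show ?thesis .
qed

lemma nu_R_first_leg:
  assumes "trilinear_form \<Psi>"
  shows "(\<Sum>(r1, r2)\<leftarrow>R. \<Sum>(X, Z)\<leftarrow>\<nu> r1. \<Psi> X Z r2) = (\<Sum>(r1, r2)\<leftarrow>R. \<Psi> r1 1 r2)"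
proof -
  note \<Psi> = trilinear_formD[OF assms, THEN lin_form_comp]
  have "(\<Sum>(r1, r2)\<leftarrow>R. \<Sum>(X, Z)\<leftarrow>\<nu> r1. \<Psi> X Z r2)
      = (\<Sum>(r1, r2)\<leftarrow>R. \<Sum>(p1, p2)\<leftarrow>R. \<Sum>(t1, t2)\<leftarrow>R. \<Sum>(x, y)\<leftarrow>\<Delta> r1. \<Sum>(y1, y2)\<leftarrow>\<Delta> y.
           \<Psi> (p2 * (y1 * t2)) (S x * (S p1 * (y2 * t1))) r2)"
    by (simp add: nu_sum Delta3_sum mult.assoc)
  also have "\<dots> = (\<Sum>(r1, r2)\<leftarrow>R. \<Sum>(x, y)\<leftarrow>\<Delta> r1. \<Sum>(y1, y2)\<leftarrow>\<Delta> y. \<Sum>(p1, p2)\<leftarrow>R. \<Sum>(t1, t2)\<leftarrow>R.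
           \<Psi> (p2 * (y1 * t2)) (S x * (S p1 * (y2 * t1))) r2)"
    by (rule sum_list_prod_cong, rule sum_list_prod_swap2)
  also have "\<dots> = (\<Sum>(r1, r2)\<leftarrow>R. \<Sum>(s1, s2)\<leftarrow>R. \<Sum>(y1, y2)\<leftarrow>\<Delta> s1. \<Sum>(p1, p2)\<leftarrow>R. \<Sum>(t1, t2)\<leftarrow>R.
           \<Psi> (p2 * (y1 * t2)) (S r1 * (S p1 * (y2 * t1))) (r2 * s2))"
    by (rule sqt_axiom1_sum[of "\<lambda>x y c. \<Sum>(y1, y2)\<leftarrow>\<Delta> y. \<Sum>(p1, p2)\<leftarrow>R. \<Sum>(t1, t2)\<leftarrow>R.
        \<Psi> (p2 * (y1 * t2)) (S x * (S p1 * (y2 * t1))) c"]) (auto intro!: \<Psi>)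
  also have "\<dots> = (\<Sum>(r1, r2)\<leftarrow>R. \<Sum>(s1, s2)\<leftarrow>R. \<Sum>(y1, y2)\<leftarrow>\<Delta> s1. \<Sum>(p1, p2)\<leftarrow>R. \<Sum>(t1, t2)\<leftarrow>R.
           \<Psi> (p2 * (t2 * y2)) (S r1 * (S p1 * (t1 * y1))) (r2 * s2))"
    by (rule sum_list_prod_cong, rule sqt_axiom4_sum_nested[of "\<lambda>p1 p2 a b c. \<Psi> (p2 * b) (S _ * (S p1 * a)) (_ * c)"])
      (auto intro!: \<Psi>)
  also have "\<dots> = (\<Sum>(r1, r2)\<leftarrow>R. \<Sum>(s1, s2)\<leftarrow>R. \<Sum>(y1, y2)\<leftarrow>\<Delta> s1. \<Psi> y2 (S r1 * y1) (r2 * s2))"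
  proof (intro sum_list_prod_cong)
    fix r1 r2 s1 s2 y1 y2
    show "(\<Sum>(p1, p2)\<leftarrow>R. \<Sum>(t1, t2)\<leftarrow>R. \<Psi> (p2 * (t2 * y2)) (S r1 * (S p1 * (t1 * y1))) (r2 * s2))
        = \<Psi> y2 (S r1 * y1) (r2 * s2)"
      by (subst antipode_R_mult_R[of "\<lambda>a b. \<Psi> (b * y2) (S r1 * (a * y1)) (r2 * s2)", unfolded mult.assoc])
        (auto intro!: \<Psi>)
  qed
  also have "\<dots> = (\<Sum>(r1, r2)\<leftarrow>R. \<Psi> r1 1 r2)"
    by (rule sqt_axiom1_antipode_collapse[OF assms])
  finally show ?thesis .
qed

lemma sqt_axiom2_antipode_collapse:
  assumes "trilinear_form \<Psi>"
  shows "(\<Sum>(r1, r2)\<leftarrow>R. \<Sum>(y1, y2)\<leftarrow>\<Delta> r2. \<Sum>(s1, s2)\<leftarrow>R. \<Psi> (r1 * s1) y2 (S s2 * y1))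
       = (\<Sum>(r1, r2)\<leftarrow>R. \<Psi> r1 r2 1)"
proof -
  note \<Psi> = trilinear_formD[OF assms, THEN lin_form_comp]
  have "(\<Sum>(r1, r2)\<leftarrow>R. \<Sum>(y1, y2)\<leftarrow>\<Delta> r2. \<Sum>(s1, s2)\<leftarrow>R. \<Psi> (r1 * s1) y2 (S s2 * y1))
      = (\<Sum>(r1, r2)\<leftarrow>R. \<Sum>(s1, s2)\<leftarrow>R. \<Sum>(y1, y2)\<leftarrow>\<Delta> r2. \<Psi> (r1 * s1) y2 (S s2 * y1))"
    by (rule sum_list_prod_cong, rule sum_list_prod_swap)
  also have "\<dots> = (\<Sum>(r1, r2)\<leftarrow>R. \<Sum>(x, y)\<leftarrow>\<Delta> r2. \<Sum>(y1, y2)\<leftarrow>\<Delta> y. \<Psi> r1 y2 (S x * y1))"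
    by (rule sqt_axiom2_sum[of "\<lambda>a x y. \<Sum>(y1, y2)\<leftarrow>\<Delta> y. \<Psi> a y2 (S x * y1)", symmetric])
      (auto intro!: \<Psi>)
  also have "\<dots> = (\<Sum>(r1, r2)\<leftarrow>R. \<Sum>(x, y)\<leftarrow>\<Delta> r2. \<Sum>(x1, x2)\<leftarrow>\<Delta> x. \<Psi> r1 y (S x1 * x2))"
    by (intro sum_list_prod_cong Delta_sum_coassoc[of "\<lambda>x y1 y2. \<Psi> _ y2 (S x * y1)"]) (auto intro!: \<Psi>)
  also have "\<dots> = (\<Sum>(r1, r2)\<leftarrow>R. \<Sum>(x, y)\<leftarrow>\<Delta> r2. \<epsilon> x * \<Psi> r1 y 1)"
    using antipode_left_form[OF trilinear_formD(1)[OF assms] lin_map_id] by simp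
  also have "\<dots> = (\<Sum>(r1, r2)\<leftarrow>R. \<Psi> r1 r2 1)"
    using counit_left_form[OF trilinear_formD(2)[OF assms] lin_map_id] by simp
  finally show ?thesis .
qed

lemma nu_R_second_leg:
  assumes "trilinear_form \<Psi>"
  shows "(\<Sum>(r1, r2)\<leftarrow>R. \<Sum>(X, Z)\<leftarrow>\<nu> r2. \<Psi> r1 X Z) = (\<Sum>(r1, r2)\<leftarrow>R. \<Psi> r1 r2 1)"
proof -
  note \<Psi> = trilinear_formD[OF assms, THEN lin_form_comp]
  have "(\<Sum>(r1, r2)\<leftarrow>R. \<Sum>(X, Z)\<leftarrow>\<nu> r2. \<Psi> r1 X Z)
      = (\<Sum>(r1, r2)\<leftarrow>R. \<Sum>(p1, p2)\<leftarrow>R. \<Sum>(t1, t2)\<leftarrow>R. \<Sum>(x, y)\<leftarrow>\<Delta> r2. \<Sum>(y1, y2)\<leftarrow>\<Delta> y.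
           \<Psi> r1 (p2 * (y1 * t2)) (S x * (S p1 * (y2 * t1))))"
    by (simp add: nu_sum Delta3_sum mult.assoc)
  also have "\<dots> = (\<Sum>(r1, r2)\<leftarrow>R. \<Sum>(x, y)\<leftarrow>\<Delta> r2. \<Sum>(y1, y2)\<leftarrow>\<Delta> y. \<Sum>(p1, p2)\<leftarrow>R. \<Sum>(t1, t2)\<leftarrow>R.
           \<Psi> r1 (p2 * (y1 * t2)) (S x * (S p1 * (y2 * t1))))"
    by (rule sum_list_prod_cong, rule sum_list_prod_swap2)
  also have "\<dots> = (\<Sum>(r1, r2)\<leftarrow>R. \<Sum>(s1, s2)\<leftarrow>R. \<Sum>(y1, y2)\<leftarrow>\<Delta> r2. \<Sum>(p1, p2)\<leftarrow>R. \<Sum>(t1, t2)\<leftarrow>R.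
           \<Psi> (r1 * s1) (p2 * (y1 * t2)) (S s2 * (S p1 * (y2 * t1))))"
    by (rule sqt_axiom2_sum[of "\<lambda>a x y. \<Sum>(y1, y2)\<leftarrow>\<Delta> y. \<Sum>(p1, p2)\<leftarrow>R. \<Sum>(t1, t2)\<leftarrow>R.
        \<Psi> a (p2 * (y1 * t2)) (S x * (S p1 * (y2 * t1)))"]) (auto intro!: \<Psi>)
  also have "\<dots> = (\<Sum>(r1, r2)\<leftarrow>R. \<Sum>(y1, y2)\<leftarrow>\<Delta> r2. \<Sum>(s1, s2)\<leftarrow>R. \<Sum>(p1, p2)\<leftarrow>R. \<Sum>(t1, t2)\<leftarrow>R.
           \<Psi> (r1 * s1) (p2 * (y1 * t2)) (S s2 * (S p1 * (y2 * t1))))"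
    by (rule sum_list_prod_cong, rule sum_list_prod_swap)
  also have "\<dots> = (\<Sum>(r1, r2)\<leftarrow>R. \<Sum>(y1, y2)\<leftarrow>\<Delta> r2. \<Sum>(s1, s2)\<leftarrow>R. \<Sum>(p1, p2)\<leftarrow>R. \<Sum>(t1, t2)\<leftarrow>R.
           \<Psi> (r1 * s1) (p2 * (t2 * y2)) (S s2 * (S p1 * (t1 * y1))))"
    by (rule sqt_axiom3_sum_nested[of "\<lambda>a s1 s2 p1 p2 x y. \<Psi> (a * s1) (p2 * y) (S s2 * (S p1 * x))"])
      (auto intro!: \<Psi>)
  also have "\<dots> = (\<Sum>(r1, r2)\<leftarrow>R. \<Sum>(y1, y2)\<leftarrow>\<Delta> r2. \<Sum>(s1, s2)\<leftarrow>R. \<Psi> (r1 * s1) y2 (S s2 * y1))"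
  proof (intro sum_list_prod_cong)
    fix r1 r2 y1 y2 s1 s2
    show "(\<Sum>(p1, p2)\<leftarrow>R. \<Sum>(t1, t2)\<leftarrow>R. \<Psi> (r1 * s1) (p2 * (t2 * y2)) (S s2 * (S p1 * (t1 * y1))))
        = \<Psi> (r1 * s1) y2 (S s2 * y1)"
      by (subst antipode_R_mult_R[of "\<lambda>a b. \<Psi> (r1 * s1) (b * y2) (S s2 * (a * y1))", unfolded mult.assoc])
        (auto intro!: \<Psi>)
  qed
  also have "\<dots> = (\<Sum>(r1, r2)\<leftarrow>R. \<Psi> r1 r2 1)"
    by (rule sqt_axiom2_antipode_collapse[OF assms])
  finally show ?thesis .
qed

lemma nu_antipode_R_second_leg:
  assumes "trilinear_form \<Psi>"
  shows "(\<Sum>(r1, r2)\<leftarrow>R. \<Sum>(X, Z)\<leftarrow>\<nu> (S r2). \<Psi> r1 X Z) = (\<Sum>(r1, r2)\<leftarrow>R. \<Psi> r1 (S r2) 1)"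
proof -
  note \<Psi> = trilinear_formD[OF assms, THEN lin_form_comp]
  have "(\<Sum>(r1, r2)\<leftarrow>R. \<Sum>(X, Z)\<leftarrow>\<nu> (S r2). \<Psi> r1 X Z)
      = (\<Sum>(r1, r2)\<leftarrow>R. \<Sum>(X, Z)\<leftarrow>\<nu> (S r2). \<Psi> (Sinv (S r1)) X Z)"
    by simp
  also have "\<dots> = (\<Sum>(r1, r2)\<leftarrow>R. \<Sum>(X, Z)\<leftarrow>\<nu> r2. \<Psi> (Sinv r1) X Z)"
    by (rule antipode_antipode_R[of "\<lambda>a b. \<Sum>(X, Z)\<leftarrow>\<nu> b. \<Psi> (Sinv a) X Z"]) (auto intro!: \<Psi>)
  also have "\<dots> = (\<Sum>(r1, r2)\<leftarrow>R. \<Psi> (Sinv r1) r2 1)"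
    by (rule nu_R_second_leg[of "\<lambda>a X Z. \<Psi> (Sinv a) X Z"]) (auto intro!: \<Psi>)
  also have "\<dots> = (\<Sum>(r1, r2)\<leftarrow>R. \<Psi> (Sinv (S r1)) (S r2) 1)"
    by (rule antipode_antipode_R[of "\<lambda>a b. \<Psi> (Sinv a) b 1", symmetric]) (auto intro!: \<Psi>)
  finally show ?thesis by simp
qed

lemma nu_mult_expand:
  assumes "bilinear_form \<Psi>"
  shows "(\<Sum>(X, Z)\<leftarrow>\<nu> (h * k). \<Psi> X Z)
       = (\<Sum>(X, Z)\<leftarrow>\<nu> h. \<Sum>(p1, p2)\<leftarrow>R. \<Sum>(s1, s2)\<leftarrow>R. \<Sum>(b1, b2, b3)\<leftarrow>Delta3 \<Delta> k.
           \<Psi> (X * (p2 * (b2 * s2))) (S b1 * (Z * (S p1 * (b3 * s1)))))"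
proof -
  note \<Psi> = bilinear_formD[OF assms, THEN lin_form_comp]
  have "(\<Sum>(X, Z)\<leftarrow>\<nu> (h * k). \<Psi> X Z)
      = (\<Sum>(r1, r2)\<leftarrow>R. \<Sum>(s1, s2)\<leftarrow>R. \<Sum>(c1, c2, c3)\<leftarrow>Delta3 \<Delta> (h * k).
           \<Psi> (r2 * c2 * s2) (S c1 * S r1 * c3 * s1))"
    by (rule nu_sum)
  also have "\<dots> = (\<Sum>(r1, r2)\<leftarrow>R. \<Sum>(s1, s2)\<leftarrow>R. \<Sum>(a1, a2, a3)\<leftarrow>Delta3 \<Delta> h. \<Sum>(b1, b2, b3)\<leftarrow>Delta3 \<Delta> k.
      \<Psi> (r2 * (a2 * (1 * (b2 * s2)))) (S b1 * (S a1 * (S r1 * (a3 * (1 * (b3 * s1)))))))"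
    by (intro sum_list_prod_cong, subst Delta3_sum_mult) (auto intro!: \<Psi> simp: antipode_mult mult.assoc)
  also have "\<dots> = (\<Sum>(r1, r2)\<leftarrow>R. \<Sum>(q1, q2)\<leftarrow>R. \<Sum>(p1, p2)\<leftarrow>R. \<Sum>(s1, s2)\<leftarrow>R.
      \<Sum>(a1, a2, a3)\<leftarrow>Delta3 \<Delta> h. \<Sum>(b1, b2, b3)\<leftarrow>Delta3 \<Delta> k.
        \<Psi> (r2 * (a2 * ((q2 * p2) * (b2 * s2)))) (S b1 * (S a1 * (S r1 * (a3 * ((q1 * S p1) * (b3 * s1)))))))"
  proof (rule sum_list_prod_cong)
    fix r1 r2
    show "(\<Sum>(s1, s2)\<leftarrow>R. \<Sum>(a1, a2, a3)\<leftarrow>Delta3 \<Delta> h. \<Sum>(b1, b2, b3)\<leftarrow>Delta3 \<Delta> k.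
        \<Psi> (r2 * (a2 * (1 * (b2 * s2)))) (S b1 * (S a1 * (S r1 * (a3 * (1 * (b3 * s1)))))))
      = (\<Sum>(q1, q2)\<leftarrow>R. \<Sum>(p1, p2)\<leftarrow>R. \<Sum>(s1, s2)\<leftarrow>R.
      \<Sum>(a1, a2, a3)\<leftarrow>Delta3 \<Delta> h. \<Sum>(b1, b2, b3)\<leftarrow>Delta3 \<Delta> k.
        \<Psi> (r2 * (a2 * ((q2 * p2) * (b2 * s2)))) (S b1 * (S a1 * (S r1 * (a3 * ((q1 * S p1) * (b3 * s1)))))))"
      by (subst R_mult_antipode_R[of "\<lambda>x y. \<Sum>(s1, s2)\<leftarrow>R. \<Sum>(a1, a2, a3)\<leftarrow>Delta3 \<Delta> h. \<Sum>(b1, b2, b3)\<leftarrow>Delta3 \<Delta> k.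
          \<Psi> (r2 * (a2 * (y * (b2 * s2)))) (S b1 * (S a1 * (S r1 * (a3 * (x * (b3 * s1))))))"])
        (auto intro!: \<Psi>)
  qed
  also have "\<dots> = (\<Sum>(r1, r2)\<leftarrow>R. \<Sum>(q1, q2)\<leftarrow>R. \<Sum>(a1, a2, a3)\<leftarrow>Delta3 \<Delta> h.
      \<Sum>(p1, p2)\<leftarrow>R. \<Sum>(s1, s2)\<leftarrow>R. \<Sum>(b1, b2, b3)\<leftarrow>Delta3 \<Delta> k.
        \<Psi> (r2 * (a2 * ((q2 * p2) * (b2 * s2)))) (S b1 * (S a1 * (S r1 * (a3 * ((q1 * S p1) * (b3 * s1)))))))"
    by (rule sum_list_prod_cong, rule sum_list_prod_cong)
      (simp only: sum_list_prod_triple_swap[where ys = "Delta3 \<Delta> h"])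
  also have "\<dots> = (\<Sum>(X, Z)\<leftarrow>\<nu> h. \<Sum>(p1, p2)\<leftarrow>R. \<Sum>(s1, s2)\<leftarrow>R. \<Sum>(b1, b2, b3)\<leftarrow>Delta3 \<Delta> k.
           \<Psi> (X * (p2 * (b2 * s2))) (S b1 * (Z * (S p1 * (b3 * s1)))))"
    by (simp add: nu_sum mult.assoc)
  finally show ?thesis .
qed

lemma nu_mult_sum:
  assumes "bilinear_form \<Psi>"
  shows "(\<Sum>(X, Z)\<leftarrow>\<nu> (h * k). \<Psi> X Z) = (\<Sum>(X1, Z1)\<leftarrow>\<nu> h. \<Sum>(X2, Z2)\<leftarrow>\<nu> k. \<Psi> (X1 * X2) (Z1 * Z2))"
proof -
  note \<Psi> = bilinear_formD[OF assms, THEN lin_form_comp]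
  obtain ys where ys: "\<forall>(a, z) \<in> set ys. z \<in> centre" "teq2 scale (\<nu> h) ys"
    using nu_centre_valued by blast
  define G where "G X Z = (\<Sum>(p1, p2)\<leftarrow>R. \<Sum>(s1, s2)\<leftarrow>R. \<Sum>(b1, b2, b3)\<leftarrow>Delta3 \<Delta> k.
      \<Psi> (X * (p2 * (b2 * s2))) (S b1 * (Z * (S p1 * (b3 * s1)))))" for X Z
  define G' where "G' X Z = (\<Sum>(p1, p2)\<leftarrow>R. \<Sum>(s1, s2)\<leftarrow>R. \<Sum>(b1, b2, b3)\<leftarrow>Delta3 \<Delta> k.
      \<Psi> (X * (p2 * (b2 * s2))) (Z * (S b1 * (S p1 * (b3 * s1)))))" for X Z
  have "bilinear_form G" "bilinear_form G'"
    unfolding G_def G'_def by (auto intro!: \<Psi>)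
  have "(\<Sum>(X, Z)\<leftarrow>\<nu> (h * k). \<Psi> X Z) = (\<Sum>(X, Z)\<leftarrow>\<nu> h. G X Z)"
    unfolding G_def by (rule nu_mult_expand[OF assms])
  also have "\<dots> = (\<Sum>(X, Z)\<leftarrow>ys. G X Z)"
    by (rule teq2_sum_eq[OF ys(2) \<open>bilinear_form G\<close>])
  also have "\<dots> = (\<Sum>(X, Z)\<leftarrow>ys. G' X Z)"
  proof (intro arg_cong[where f = sum_list] map_cong refl, clarify)
    fix X Z assume "(X, Z) \<in> set ys"
    then have "Z * x = x * Z" for x
      using ys(1) unfolding centre_def by auto
    then have "a * (Z * w) = Z * (a * w)" for a w
      by (metis mult.assoc)
    then show "G X Z = G' X Z"
      unfolding G_def G'_def by simp
  qed
  also have "\<dots> = (\<Sum>(X, Z)\<leftarrow>\<nu> h. G' X Z)"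
    by (rule teq2_sum_eq[OF ys(2) \<open>bilinear_form G'\<close>, symmetric])
  also have "\<dots> = (\<Sum>(X1, Z1)\<leftarrow>\<nu> h. \<Sum>(X2, Z2)\<leftarrow>\<nu> k. \<Psi> (X1 * X2) (Z1 * Z2))"
    unfolding G'_def by (simp add: nu_sum mult.assoc)
  finally show ?thesis .
qed

definition coinvariant :: "'h \<Rightarrow> bool" where
  "coinvariant h \<longleftrightarrow> teq2 scale (\<nu> h) [(h, 1)]"

lemma coinvariant_mult:
  assumes a: "coinvariant a" and b: "coinvariant b"
  shows "coinvariant (a * b)"
  unfolding coinvariant_def teq2_def
proof (intro allI impI)
  fix f g assume f: "LF f" and g: "LF g"
  note fc = lin_form_comp[OF f] and gc = lin_form_comp[OF g]
  have "(\<Sum>(X, Z)\<leftarrow>\<nu> (a * b). f X * g Z) = (\<Sum>(X1, Z1)\<leftarrow>\<nu> a. \<Sum>(X2, Z2)\<leftarrow>\<nu> b. f (X1 * X2) * g (Z1 * Z2))"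
    by (rule nu_mult_sum) (auto intro!: fc gc)
  also have "\<dots> = (\<Sum>(X2, Z2)\<leftarrow>\<nu> b. f (a * X2) * g Z2)"
    by (subst teq2_sum_eq[OF a[unfolded coinvariant_def], of "\<lambda>X1 Z1. \<Sum>(X2, Z2)\<leftarrow>\<nu> b. f (X1 * X2) * g (Z1 * Z2)"])
      (auto intro!: fc gc)
  also have "\<dots> = f (a * b) * g 1"
    by (subst teq2_sum_eq[OF b[unfolded coinvariant_def], of "\<lambda>X2 Z2. f (a * X2) * g Z2"])
      (auto intro!: fc gc)
  finally show "(\<Sum>(X, Z)\<leftarrow>\<nu> (a * b). f X * g Z) = (\<Sum>(X, Z)\<leftarrow>[(a * b, 1)]. f X * g Z)"
    by simp
qed

lemma nu_sum_sum_list: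
  assumes "bilinear_form \<Psi>"
  shows "(\<Sum>(X, Z)\<leftarrow>\<nu> (\<Sum>(a, b)\<leftarrow>xs. F a b). \<Psi> X Z) = (\<Sum>(a, b)\<leftarrow>xs. \<Sum>(X, Z)\<leftarrow>\<nu> (F a b). \<Psi> X Z)"
  by (rule lin_form_sum_list_prod[OF lin_form_nu_sum[OF assms lin_map_id]])

lemma antipode_drinfeld: "S (drinfeld S R) = (\<Sum>(r1, r2)\<leftarrow>R. r1 * S r2)"
proof -
  have "S (drinfeld S R) = (\<Sum>(r1, r2)\<leftarrow>R. S r1 * S (S r2))"
    unfolding drinfeld_def by (simp add: antipode_sum_list antipode_mult)
  also have "\<dots> = (\<Sum>(r1, r2)\<leftarrow>R. r1 * S r2)"
  proof (rule lin_forms_separate)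
    fix f assume f: "LF f"
    show "f (\<Sum>(r1, r2)\<leftarrow>R. S r1 * S (S r2)) = f (\<Sum>(r1, r2)\<leftarrow>R. r1 * S r2)"
      unfolding lin_form_sum_list_prod[OF f]
      by (rule antipode_antipode_R[of "\<lambda>a b. f (a * S b)"]) (auto intro!: lin_form_comp[OF f])
  qed
  finally show ?thesis .
qed

lemma coinvariant_drinfeld: "coinvariant (drinfeld S R)"
  unfolding coinvariant_def teq2_def
proof (intro allI impI)
  fix f g assume f: "LF f" and g: "LF g"
  note fc = lin_form_comp[OF f] and gc = lin_form_comp[OF g]
  have "(\<Sum>(X, Z)\<leftarrow>\<nu> (drinfeld S R). f X * g Z) = (\<Sum>(r1, r2)\<leftarrow>R. \<Sum>(X, Z)\<leftarrow>\<nu> (S r2 * r1). f X * g Z)"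
    unfolding drinfeld_def by (rule nu_sum_sum_list) (auto intro!: fc gc)
  also have "\<dots> = (\<Sum>(r1, r2)\<leftarrow>R. \<Sum>(X1, Z1)\<leftarrow>\<nu> (S r2). \<Sum>(X2, Z2)\<leftarrow>\<nu> r1. f (X1 * X2) * g (Z1 * Z2))"
    by (intro sum_list_prod_cong nu_mult_sum) (auto intro!: fc gc)
  also have "\<dots> = (\<Sum>(r1, r2)\<leftarrow>R. \<Sum>(X2, Z2)\<leftarrow>\<nu> r1. \<Sum>(X1, Z1)\<leftarrow>\<nu> (S r2). f (X1 * X2) * g (Z1 * Z2))"
    by (rule sum_list_prod_cong, rule sum_list_prod_swap)
  also have "\<dots> = (\<Sum>(r1, r2)\<leftarrow>R. \<Sum>(X1, Z1)\<leftarrow>\<nu> (S r2). f (X1 * r1) * g Z1)"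
    by (rule nu_R_first_leg[of "\<lambda>X Z c. \<Sum>(X1, Z1)\<leftarrow>\<nu> (S c). f (X1 * X) * g (Z1 * Z)", simplified])
      (auto intro!: fc gc)
  also have "\<dots> = (\<Sum>(r1, r2)\<leftarrow>R. f (S r2 * r1) * g 1)"
    by (rule nu_antipode_R_second_leg[of "\<lambda>a X Z. f (X * a) * g Z"]) (auto intro!: fc gc)
  also have "\<dots> = f (drinfeld S R) * g 1"
    unfolding drinfeld_def lin_form_sum_list_prod[OF f] by (simp add: sum_list_mult_const case_prod_unfold)
  finally show "(\<Sum>(X, Z)\<leftarrow>\<nu> (drinfeld S R). f X * g Z) = (\<Sum>(X, Z)\<leftarrow>[(drinfeld S R, 1)]. f X * g Z)"
    by simp
qed

lemma coinvariant_antipode_drinfeld: "coinvariant (S (drinfeld S R))"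
  unfolding coinvariant_def teq2_def antipode_drinfeld
proof (intro allI impI)
  fix f g assume f: "LF f" and g: "LF g"
  note fc = lin_form_comp[OF f] and gc = lin_form_comp[OF g]
  let ?v = "\<Sum>(r1, r2)\<leftarrow>R. r1 * S r2"
  have "(\<Sum>(X, Z)\<leftarrow>\<nu> ?v. f X * g Z) = (\<Sum>(r1, r2)\<leftarrow>R. \<Sum>(X, Z)\<leftarrow>\<nu> (r1 * S r2). f X * g Z)"
    by (rule nu_sum_sum_list) (auto intro!: fc gc)
  also have "\<dots> = (\<Sum>(r1, r2)\<leftarrow>R. \<Sum>(X1, Z1)\<leftarrow>\<nu> r1. \<Sum>(X2, Z2)\<leftarrow>\<nu> (S r2). f (X1 * X2) * g (Z1 * Z2))"
    by (intro sum_list_prod_cong nu_mult_sum) (auto intro!: fc gc)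
  also have "\<dots> = (\<Sum>(r1, r2)\<leftarrow>R. \<Sum>(X2, Z2)\<leftarrow>\<nu> (S r2). f (r1 * X2) * g Z2)"
    by (rule nu_R_first_leg[of "\<lambda>X Z c. \<Sum>(X2, Z2)\<leftarrow>\<nu> (S c). f (X * X2) * g (Z * Z2)", simplified])
      (auto intro!: fc gc)
  also have "\<dots> = (\<Sum>(r1, r2)\<leftarrow>R. f (r1 * S r2) * g 1)"
    by (rule nu_antipode_R_second_leg[of "\<lambda>a X Z. f (a * X) * g Z"]) (auto intro!: fc gc)
  also have "\<dots> = f ?v * g 1"
    unfolding lin_form_sum_list_prod[OF f] by (simp add: sum_list_mult_const case_prod_unfold)
  finally show "(\<Sum>(X, Z)\<leftarrow>\<nu> ?v. f X * g Z) = (\<Sum>(X, Z)\<leftarrow>[(?v, 1)]. f X * g Z)"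
    by simp
qed

end

theorem proposition3p4:
  fixes scale :: "'k::field \<Rightarrow> 'h::ring_1 \<Rightarrow> 'h"
    and \<Delta> :: "'h \<Rightarrow> ('h \<times> 'h) list" and \<epsilon> :: "'h \<Rightarrow> 'k" and S :: "'h \<Rightarrow> 'h"
    and R :: "('h \<times> 'h) list"
  assumes "semiquasitriangular scale \<Delta> \<epsilon> S R"
  defines "u \<equiv> drinfeld S R"
  shows "teq2 scale (nu \<Delta> S R u) [(u, 1)] \<and>
         teq2 scale (nu \<Delta> S R (S u)) [(S u, 1)] \<and>
         teq2 scale (nu \<Delta> S R (u * S u)) [(u * S u, 1)]"
proof -
  interpret sqt_hopf scale \<Delta> \<epsilon> S R
    using assms(1) unfolding sqt_hopf_def hopf_def sqt_hopf_axioms_def semiquasitriangular_def by blast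
  have "coinvariant u" "coinvariant (S u)"
    unfolding u_def by (fact coinvariant_drinfeld coinvariant_antipode_drinfeld)+
  then show ?thesis
    using coinvariant_mult unfolding coinvariant_def by blast
qed

end
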